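(* Let $A\subseteq B$ be an extension of commutative rings such that $B$ has only finitely many maximal ideals. Then the canonical map $\mathfrak{C}(A,B)\to\operatorname{Pic}(A)$, sending the class of an invertible ideal $L$ to $[L]$, is an isomorphism of groups.
   Context: For an extension of rings $A\subseteq B$ and $A$-submodules $L,L'$ of $B$, $LL'$ is the $A$-submodule of finite sums $\sum x_ky_k$. An $A$-submodule $L$ of $B$ is an invertible ideal of $A\subseteq B$ if $LL'=A$ for some $A$-submodule $L'$ of $B$; these form an abelian group $\mathscr{G}(A,B)$ and $\mathfrak{C}(A,B)=\mathscr{G}(A,B)/\{Ax:x\in B^\ast\}$. $\operatorname{Pic}(A)$ is the group of isomorphism classes of finitely generated projective $A$-modules of constant rank $1$ under $\otimes_A$; invertible ideals are such modules. *)

theory Defs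
  imports "HOL-Algebra.Algebra"
begin

definition subring_ring :: "('b, 'c) ring_scheme \<Rightarrow> 'b set \<Rightarrow> ('b, 'c) ring_scheme" where
  "subring_ring B A = B\<lparr>carrier := A\<rparr>"

definition is_A_submodule :: "('b, 'c) ring_scheme \<Rightarrow> 'b set \<Rightarrow> 'b set \<Rightarrow> bool" where
  "is_A_submodule B A L \<longleftrightarrow> L \<subseteq> carrier B \<and> \<zero>\<^bsub>B\<^esub> \<in> L \<and>
     (\<forall>x\<in>L. \<forall>y\<in>L. x \<oplus>\<^bsub>B\<^esub> y \<in> L) \<and> (\<forall>x\<in>L. \<ominus>\<^bsub>B\<^esub> x \<in> L) \<and>
     (\<forall>a\<in>A. \<forall>x\<in>L. a \<otimes>\<^bsub>B\<^esub> x \<in> L)"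

inductive_set prod_submod :: "('b, 'c) ring_scheme \<Rightarrow> 'b set \<Rightarrow> 'b set \<Rightarrow> 'b set"
  for B L L' where
  zero: "\<zero>\<^bsub>B\<^esub> \<in> prod_submod B L L'"
| prod: "x \<in> L \<Longrightarrow> y \<in> L' \<Longrightarrow> x \<otimes>\<^bsub>B\<^esub> y \<in> prod_submod B L L'"
| add: "u \<in> prod_submod B L L' \<Longrightarrow> v \<in> prod_submod B L L' \<Longrightarrow> u \<oplus>\<^bsub>B\<^esub> v \<in> prod_submod B L L'"

definition invertible_ideal :: "('b, 'c) ring_scheme \<Rightarrow> 'b set \<Rightarrow> 'b set \<Rightarrow> bool" where
  "invertible_ideal B A L \<longleftrightarrow> is_A_submodule B A L \<and>
     (\<exists>L'. is_A_submodule B A L' \<and> prod_submod B L L' = A)"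

definition principal_submod :: "('b, 'c) ring_scheme \<Rightarrow> 'b set \<Rightarrow> 'b \<Rightarrow> 'b set" where
  "principal_submod B A x = {a \<otimes>\<^bsub>B\<^esub> x | a. a \<in> A}"

definition submod_as_module :: "('b, 'c) ring_scheme \<Rightarrow> 'b set \<Rightarrow> ('b, 'b) module" where
  "submod_as_module B L = \<lparr>carrier = L, monoid.mult = monoid.mult B, one = monoid.one B, ring.zero = ring.zero B,
      ring.add = ring.add B, smult = monoid.mult B\<rparr>"

definition lin_map :: "('a, 'r) ring_scheme \<Rightarrow> ('a, 'm, 's) module_scheme \<Rightarrow>
    ('a, 'n, 't) module_scheme \<Rightarrow> ('m \<Rightarrow> 'n) \<Rightarrow> bool" where
  "lin_map R M N f \<longleftrightarrow> f \<in> carrier M \<rightarrow> carrier N \<and>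
     (\<forall>x\<in>carrier M. \<forall>y\<in>carrier M. f (x \<oplus>\<^bsub>M\<^esub> y) = f x \<oplus>\<^bsub>N\<^esub> f y) \<and>
     (\<forall>a\<in>carrier R. \<forall>x\<in>carrier M. f (a \<odot>\<^bsub>M\<^esub> x) = a \<odot>\<^bsub>N\<^esub> f x)"

definition mod_iso :: "('a, 'r) ring_scheme \<Rightarrow> ('a, 'm, 's) module_scheme \<Rightarrow>
    ('a, 'n, 't) module_scheme \<Rightarrow> bool" where
  "mod_iso R M N \<longleftrightarrow> (\<exists>f. lin_map R M N f \<and> bij_betw f (carrier M) (carrier N))"

definition bilin_map :: "('a, 'r) ring_scheme \<Rightarrow> ('a, 'm, 's) module_scheme \<Rightarrow>
    ('a, 'n, 't) module_scheme \<Rightarrow> ('a, 'p, 'u) module_scheme \<Rightarrow> ('m \<Rightarrow> 'n \<Rightarrow> 'p) \<Rightarrow> bool" where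
  "bilin_map R M N P \<beta> \<longleftrightarrow>
     (\<forall>x\<in>carrier M. \<forall>y\<in>carrier N. \<beta> x y \<in> carrier P) \<and>
     (\<forall>x\<in>carrier M. lin_map R N P (\<beta> x)) \<and>
     (\<forall>y\<in>carrier N. lin_map R M P (\<lambda>x. \<beta> x y))"

definition free_module :: "('a, 'r) ring_scheme \<Rightarrow> nat \<Rightarrow> ('a, nat \<Rightarrow> 'a) module" where
  "free_module R n = \<lparr>carrier = {v. (\<forall>i<n. v i \<in> carrier R) \<and> (\<forall>i\<ge>n. v i = \<zero>\<^bsub>R\<^esub>)},
      monoid.mult = (\<lambda>v w i. v i \<otimes>\<^bsub>R\<^esub> w i), monoid.one = (\<lambda>i. if i < n then \<one>\<^bsub>R\<^esub> else \<zero>\<^bsub>R\<^esub>),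
      ring.zero = (\<lambda>i. \<zero>\<^bsub>R\<^esub>), ring.add = (\<lambda>v w i. v i \<oplus>\<^bsub>R\<^esub> w i),
      smult = (\<lambda>a v i. a \<otimes>\<^bsub>R\<^esub> v i)\<rparr>"

definition fg_projective :: "('a, 'r) ring_scheme \<Rightarrow> ('a, 'm, 's) module_scheme \<Rightarrow> bool" where
  "fg_projective R M \<longleftrightarrow> (\<exists>n f g. lin_map R M (free_module R n) f \<and>
      lin_map R (free_module R n) M g \<and> (\<forall>m\<in>carrier M. g (f m) = m))"

text \<open>Constant rank 1: for every prime ideal P of R the localization M_P is free of rank 1
  over R_P.  Unfolded: there is m0 in M such that m0/1 generates M_P
  (every m/1 equals (a/s) (m0/1)) and m0/1 is torsion-free over R_P.\<close>
definition const_rank_one :: "('a, 'r) ring_scheme \<Rightarrow> ('a, 'm, 's) module_scheme \<Rightarrow> bool" where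
  "const_rank_one R M \<longleftrightarrow> (\<forall>P. primeideal P R \<longrightarrow>
     (\<exists>m0\<in>carrier M.
        (\<forall>m\<in>carrier M. \<exists>a\<in>carrier R. \<exists>s\<in>carrier R - P. \<exists>t\<in>carrier R - P.
            t \<odot>\<^bsub>M\<^esub> ((s \<odot>\<^bsub>M\<^esub> m) \<oplus>\<^bsub>M\<^esub> (\<ominus>\<^bsub>M\<^esub> (a \<odot>\<^bsub>M\<^esub> m0))) = \<zero>\<^bsub>M\<^esub>) \<and>
        (\<forall>a\<in>carrier R. (\<exists>t\<in>carrier R - P. t \<odot>\<^bsub>M\<^esub> (a \<odot>\<^bsub>M\<^esub> m0) = \<zero>\<^bsub>M\<^esub>) \<longrightarrow>
            (\<exists>t\<in>carrier R - P. t \<otimes>\<^bsub>R\<^esub> a = \<zero>\<^bsub>R\<^esub>))))"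

end

theory Submission
  imports Defs
begin

(* An invertible ideal L with L L' = A has a dual basis x_i in L, y_i in L' with
   sum x_i y_i = 1. Hence m |-> (m y_i)_i exhibits L as a direct summand of A^n; at a prime P some
   x_j y_j is a unit, so L_P is free on x_j; an A-linear map from L to a submodule of B is
   multiplication by u = sum y_i f(x_i), so isomorphic invertible ideals differ by a unit of B;
   and the same dual basis shows that L K with multiplication is the tensor product of L and K.

   Conversely, let M be projective of constant rank one, a retract of A^n via f and g. As M is
   locally cyclic, all 2x2 minors of the coordinate vectors f(m) vanish, and for every maximal
   ideal Q of B some coordinate f(m)_i lies outside Q. If B has finitely many maximal ideals,
   elements e_Q outside Q but inside all other maximal ideals give w = sum_Q e_Q f(m_Q), whose
   coordinates generate the unit ideal of B; the vanishing minors then yield f(m) = phi(m) w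
   for an injective A-linear phi : M -> B, and phi(M) is an invertible ideal with inverse
   {b. phi(M) b <= A}. *)

section \<open>Modules and linear maps\<close>

lemma subring_ring_simps [simp]:
  "carrier (subring_ring B A) = A"
  "monoid.mult (subring_ring B A) = monoid.mult B"
  "monoid.one (subring_ring B A) = monoid.one B"
  "ring.zero (subring_ring B A) = ring.zero B"
  "ring.add (subring_ring B A) = ring.add B"
  by (simp_all add: subring_ring_def)

lemma submod_as_module_simps [simp]:
  "carrier (submod_as_module B L) = L"
  "monoid.mult (submod_as_module B L) = monoid.mult B"
  "monoid.one (submod_as_module B L) = monoid.one B"
  "ring.zero (submod_as_module B L) = ring.zero B"
  "ring.add (submod_as_module B L) = ring.add B"
  "smult (submod_as_module B L) = monoid.mult B"
  by (simp_all add: submod_as_module_def)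

lemma free_module_simps [simp]:
  "carrier (free_module R n) = {v. (\<forall>i<n. v i \<in> carrier R) \<and> (\<forall>i\<ge>n. v i = \<zero>\<^bsub>R\<^esub>)}"
  "smult (free_module R n) = (\<lambda>a v i. a \<otimes>\<^bsub>R\<^esub> v i)"
  "ring.add (free_module R n) = (\<lambda>v w i. v i \<oplus>\<^bsub>R\<^esub> w i)"
  "ring.zero (free_module R n) = (\<lambda>i. \<zero>\<^bsub>R\<^esub>)"
  by (simp_all add: free_module_def)

lemma lin_mapI:
  assumes "f \<in> carrier M \<rightarrow> carrier N"
    and "\<And>x y. x \<in> carrier M \<Longrightarrow> y \<in> carrier M \<Longrightarrow> f (x \<oplus>\<^bsub>M\<^esub> y) = f x \<oplus>\<^bsub>N\<^esub> f y"
    and "\<And>a x. a \<in> carrier R \<Longrightarrow> x \<in> carrier M \<Longrightarrow> f (a \<odot>\<^bsub>M\<^esub> x) = a \<odot>\<^bsub>N\<^esub> f x"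
  shows "lin_map R M N f"
  using assms unfolding lin_map_def by blast

lemma lin_mapD:
  assumes "lin_map R M N f"
  shows lin_map_closed: "\<And>x. x \<in> carrier M \<Longrightarrow> f x \<in> carrier N"
    and lin_map_add: "\<And>x y. x \<in> carrier M \<Longrightarrow> y \<in> carrier M \<Longrightarrow> f (x \<oplus>\<^bsub>M\<^esub> y) = f x \<oplus>\<^bsub>N\<^esub> f y"
    and lin_map_smult: "\<And>a x. a \<in> carrier R \<Longrightarrow> x \<in> carrier M \<Longrightarrow> f (a \<odot>\<^bsub>M\<^esub> x) = a \<odot>\<^bsub>N\<^esub> f x"
  using assms unfolding lin_map_def by blast+

lemma lin_map_zero:
  assumes "lin_map R M N f" "module R M" "module R N"
  shows "f \<zero>\<^bsub>M\<^esub> = \<zero>\<^bsub>N\<^esub>"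
proof -
  interpret M: module R M by fact
  interpret N: module R N by fact
  have "f \<zero>\<^bsub>M\<^esub> = f (\<zero>\<^bsub>R\<^esub> \<odot>\<^bsub>M\<^esub> \<zero>\<^bsub>M\<^esub>)" by simp
  also have "\<dots> = \<zero>\<^bsub>R\<^esub> \<odot>\<^bsub>N\<^esub> f \<zero>\<^bsub>M\<^esub>"
    using lin_map_smult[OF assms(1), of "\<zero>\<^bsub>R\<^esub>" "\<zero>\<^bsub>M\<^esub>"] by simp
  also have "\<dots> = \<zero>\<^bsub>N\<^esub>" using lin_map_closed[OF assms(1)] by simp
  finally show ?thesis .
qed

lemma (in module) lin_map_finsum:
  assumes "lin_map R M N f" "module R N" "finite I" "c \<in> I \<rightarrow> carrier R" "z \<in> I \<rightarrow> carrier M"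
  shows "f (\<Oplus>\<^bsub>M\<^esub>i\<in>I. c i \<odot>\<^bsub>M\<^esub> z i) = (\<Oplus>\<^bsub>N\<^esub>i\<in>I. c i \<odot>\<^bsub>N\<^esub> f (z i))"
  using assms(3-)
proof (induction I rule: finite_induct)
  case empty
  interpret N: module R N by fact
  show ?case using lin_map_zero[OF assms(1) module_axioms assms(2)] by simp
next
  case (insert i I)
  interpret N: module R N by fact
  have fz: "f \<in> carrier M \<rightarrow> carrier N" using lin_map_closed[OF assms(1)] by blast
  have "f (\<Oplus>\<^bsub>M\<^esub>i\<in>insert i I. c i \<odot>\<^bsub>M\<^esub> z i) = f (c i \<odot>\<^bsub>M\<^esub> z i \<oplus>\<^bsub>M\<^esub> (\<Oplus>\<^bsub>M\<^esub>i\<in>I. c i \<odot>\<^bsub>M\<^esub> z i))"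
    using insert by (simp add: Pi_iff)
  also have "\<dots> = c i \<odot>\<^bsub>N\<^esub> f (z i) \<oplus>\<^bsub>N\<^esub> f (\<Oplus>\<^bsub>M\<^esub>i\<in>I. c i \<odot>\<^bsub>M\<^esub> z i)"
    using insert by (simp add: lin_map_add[OF assms(1)] lin_map_smult[OF assms(1)] Pi_iff)
  also have "\<dots> = (\<Oplus>\<^bsub>N\<^esub>i\<in>insert i I. c i \<odot>\<^bsub>N\<^esub> f (z i))"
    using insert fz by (simp add: Pi_iff lin_map_closed[OF assms(1)])
  finally show ?case .
qed

lemma (in module) mod_iso_sym:
  assumes N: "module R N" and iso: "mod_iso R M N"
  shows "mod_iso R N M"
proof -
  interpret N: module R N by fact
  obtain f where f: "lin_map R M N f" and bij: "bij_betw f (carrier M) (carrier N)"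
    using iso unfolding mod_iso_def by blast
  define h where "h = inv_into (carrier M) f"
  have h: "bij_betw h (carrier N) (carrier M)" unfolding h_def by (rule bij_betw_inv_into[OF bij])
  have h_carrier: "h y \<in> carrier M" if "y \<in> carrier N" for y using h that by (auto dest: bij_betwE)
  have f_h: "f (h y) = y" if "y \<in> carrier N" for y
    using bij that unfolding h_def by (simp add: bij_betw_inv_into_right)
  have h_eq: "h y = x" if "x \<in> carrier M" "y = f x" for x y
    using bij that unfolding h_def by (simp add: bij_betw_inv_into_left)
  have "lin_map R N M h"
  proof (rule lin_mapI)
    show "h \<in> carrier N \<rightarrow> carrier M" using h_carrier by blast
    show "h (y \<oplus>\<^bsub>N\<^esub> y') = h y \<oplus>\<^bsub>M\<^esub> h y'" if "y \<in> carrier N" "y' \<in> carrier N" for y y'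
      using that h_carrier f_h by (intro h_eq) (simp_all add: lin_map_add[OF f])
    show "h (a \<odot>\<^bsub>N\<^esub> y) = a \<odot>\<^bsub>M\<^esub> h y" if "a \<in> carrier R" "y \<in> carrier N" for a y
      using that h_carrier f_h by (intro h_eq) (simp_all add: lin_map_smult[OF f])
  qed
  with h show ?thesis unfolding mod_iso_def by blast
qed

lemma bilin_map_submoduleD:
  assumes \<beta>: "bilin_map (subring_ring B A) (submod_as_module B L) (submod_as_module B K) N \<beta>"
  shows bilin_map_closed: "\<And>m k. m \<in> L \<Longrightarrow> k \<in> K \<Longrightarrow> \<beta> m k \<in> carrier N"
    and bilin_map_lin_left:
      "\<And>k. k \<in> K \<Longrightarrow> lin_map (subring_ring B A) (submod_as_module B L) N (\<lambda>m. \<beta> m k)"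
    and bilin_map_add_right: "\<And>m k k'. m \<in> L \<Longrightarrow> k \<in> K \<Longrightarrow> k' \<in> K \<Longrightarrow>
      \<beta> m (k \<oplus>\<^bsub>B\<^esub> k') = \<beta> m k \<oplus>\<^bsub>N\<^esub> \<beta> m k'"
    and bilin_map_smult_right: "\<And>a m k. a \<in> A \<Longrightarrow> m \<in> L \<Longrightarrow> k \<in> K \<Longrightarrow>
      \<beta> m (a \<otimes>\<^bsub>B\<^esub> k) = a \<odot>\<^bsub>N\<^esub> \<beta> m k"
  using \<beta> unfolding bilin_map_def lin_map_def by auto

definition basis_vec :: "('a, 'r) ring_scheme \<Rightarrow> nat \<Rightarrow> nat \<Rightarrow> 'a" where
  "basis_vec R k = (\<lambda>i. if i = k then \<one>\<^bsub>R\<^esub> else \<zero>\<^bsub>R\<^esub>)"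

lemma (in module) lin_map_free_module_expansion:
  assumes h: "lin_map R (free_module R n) M h" and v: "v \<in> carrier (free_module R n)"
  shows "h v = (\<Oplus>\<^bsub>M\<^esub>k\<in>{..<n}. v k \<odot>\<^bsub>M\<^esub> h (basis_vec R k))"
proof -
  define trunc where "trunc k = (\<lambda>i. if i < k then v i else \<zero>)" for k
  have vR: "v i \<in> carrier R" for i using v by (cases "i < n") auto
  have basis: "basis_vec R k \<in> carrier (free_module R n)" if "k < n" for k
    using that by (auto simp: basis_vec_def)
  have hb: "h (basis_vec R k) \<in> carrier M" if "k < n" for k
    using lin_map_closed[OF h basis[OF that]] .
  have "h (trunc k) = (\<Oplus>\<^bsub>M\<^esub>j\<in>{..<k}. v j \<odot>\<^bsub>M\<^esub> h (basis_vec R j))" if "k \<le> n" for k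
    using that
  proof (induction k)
    case 0
    have "trunc 0 = \<zero> \<odot>\<^bsub>free_module R n\<^esub> (\<lambda>i. \<zero>)" by (simp add: trunc_def)
    then have "h (trunc 0) = \<zero> \<odot>\<^bsub>M\<^esub> h (\<lambda>i. \<zero>)"
      using lin_map_smult[OF h, of \<zero> "\<lambda>i. \<zero>"] by simp
    then show ?case using lin_map_closed[OF h, of "\<lambda>i. \<zero>"] by simp
  next
    case (Suc k)
    have tr: "trunc j \<in> carrier (free_module R n)" for j using vR v by (auto simp: trunc_def)
    have "trunc (Suc k) = trunc k \<oplus>\<^bsub>free_module R n\<^esub> (v k \<odot>\<^bsub>free_module R n\<^esub> basis_vec R k)"
      by (auto simp: trunc_def basis_vec_def vR less_Suc_eq)
    moreover have "v k \<odot>\<^bsub>free_module R n\<^esub> basis_vec R k \<in> carrier (free_module R n)"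
      using Suc.prems vR by (auto simp: basis_vec_def)
    ultimately have "h (trunc (Suc k)) = h (trunc k) \<oplus>\<^bsub>M\<^esub> v k \<odot>\<^bsub>M\<^esub> h (basis_vec R k)"
      using Suc.prems lin_map_add[OF h tr] lin_map_smult[OF h vR basis] by simp
    then show ?case
      using Suc vR hb lin_map_closed[OF h tr]
      by (simp add: lessThan_Suc Pi_iff M.add.m_comm finsum_insert)
  qed
  moreover have "trunc n = v" using v by (auto simp: trunc_def)
  ultimately show ?thesis by auto
qed

(* m0/1 is a basis of the localisation M_P: it generates M_P, and a/1 annihilates it only
   if a/1 = 0. *)
definition local_basis :: "('a, 'r) ring_scheme \<Rightarrow> ('a, 'm, 's) module_scheme \<Rightarrow> 'a set \<Rightarrow> 'm \<Rightarrow> bool"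
  where "local_basis R M P m0 \<longleftrightarrow> m0 \<in> carrier M \<and>
    (\<forall>m\<in>carrier M. \<exists>a\<in>carrier R. \<exists>s\<in>carrier R - P. s \<odot>\<^bsub>M\<^esub> m = a \<odot>\<^bsub>M\<^esub> m0) \<and>
    (\<forall>a\<in>carrier R. (\<exists>t\<in>carrier R - P. t \<odot>\<^bsub>M\<^esub> (a \<odot>\<^bsub>M\<^esub> m0) = \<zero>\<^bsub>M\<^esub>) \<longrightarrow>
       (\<exists>t\<in>carrier R - P. t \<otimes>\<^bsub>R\<^esub> a = \<zero>\<^bsub>R\<^esub>))"

lemma (in module) const_rank_one_iff:
  "const_rank_one R M \<longleftrightarrow> (\<forall>P. primeideal P R \<longrightarrow> (\<exists>m0. local_basis R M P m0))"
proof -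
  have "(\<exists>a\<in>carrier R. \<exists>s\<in>carrier R - P. \<exists>t\<in>carrier R - P.
            t \<odot>\<^bsub>M\<^esub> (s \<odot>\<^bsub>M\<^esub> m \<oplus>\<^bsub>M\<^esub> \<ominus>\<^bsub>M\<^esub> (a \<odot>\<^bsub>M\<^esub> m0)) = \<zero>\<^bsub>M\<^esub>) \<longleftrightarrow>
        (\<exists>a\<in>carrier R. \<exists>s\<in>carrier R - P. s \<odot>\<^bsub>M\<^esub> m = a \<odot>\<^bsub>M\<^esub> m0)"
    if P: "primeideal P R" and m: "m \<in> carrier M" and m0: "m0 \<in> carrier M" for P m m0
  proof
    assume "\<exists>a\<in>carrier R. \<exists>s\<in>carrier R - P. \<exists>t\<in>carrier R - P.
            t \<odot>\<^bsub>M\<^esub> (s \<odot>\<^bsub>M\<^esub> m \<oplus>\<^bsub>M\<^esub> \<ominus>\<^bsub>M\<^esub> (a \<odot>\<^bsub>M\<^esub> m0)) = \<zero>\<^bsub>M\<^esub>"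
    then obtain a s t where ast: "a \<in> carrier R" "s \<in> carrier R - P" "t \<in> carrier R - P"
      and eq: "t \<odot>\<^bsub>M\<^esub> (s \<odot>\<^bsub>M\<^esub> m \<oplus>\<^bsub>M\<^esub> \<ominus>\<^bsub>M\<^esub> (a \<odot>\<^bsub>M\<^esub> m0)) = \<zero>\<^bsub>M\<^esub>"
      by blast
    have "(t \<otimes> s) \<odot>\<^bsub>M\<^esub> m \<oplus>\<^bsub>M\<^esub> \<ominus>\<^bsub>M\<^esub> ((t \<otimes> a) \<odot>\<^bsub>M\<^esub> m0) = \<zero>\<^bsub>M\<^esub>"
      using eq ast m m0 by (simp add: smult_r_distr smult_r_minus smult_assoc1)
    then have "(t \<otimes> s) \<odot>\<^bsub>M\<^esub> m = (t \<otimes> a) \<odot>\<^bsub>M\<^esub> m0"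
      using ast m m0 by (simp add: M.add.inv_solve_right')
    moreover have "t \<otimes> s \<notin> P" using ast primeideal.I_prime[OF P, of t s] by auto
    ultimately show "\<exists>a\<in>carrier R. \<exists>s\<in>carrier R - P. s \<odot>\<^bsub>M\<^esub> m = a \<odot>\<^bsub>M\<^esub> m0"
      using ast by blast
  next
    assume "\<exists>a\<in>carrier R. \<exists>s\<in>carrier R - P. s \<odot>\<^bsub>M\<^esub> m = a \<odot>\<^bsub>M\<^esub> m0"
    then obtain a s where "a \<in> carrier R" "s \<in> carrier R - P" "s \<odot>\<^bsub>M\<^esub> m = a \<odot>\<^bsub>M\<^esub> m0" by blast
    moreover have "\<one> \<notin> P"
      using primeideal.I_notcarr[OF P] ideal.one_imp_carrier[OF primeideal.axioms(1)[OF P]] by blast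
    ultimately show "\<exists>a\<in>carrier R. \<exists>s\<in>carrier R - P. \<exists>t\<in>carrier R - P.
            t \<odot>\<^bsub>M\<^esub> (s \<odot>\<^bsub>M\<^esub> m \<oplus>\<^bsub>M\<^esub> \<ominus>\<^bsub>M\<^esub> (a \<odot>\<^bsub>M\<^esub> m0)) = \<zero>\<^bsub>M\<^esub>"
      using m0 by (intro bexI[of _ a] bexI[of _ s] bexI[of _ \<one>]) (auto simp: M.r_neg)
  qed
  then have "(\<forall>m\<in>carrier M. \<exists>a\<in>carrier R. \<exists>s\<in>carrier R - P. \<exists>t\<in>carrier R - P.
            t \<odot>\<^bsub>M\<^esub> (s \<odot>\<^bsub>M\<^esub> m \<oplus>\<^bsub>M\<^esub> \<ominus>\<^bsub>M\<^esub> (a \<odot>\<^bsub>M\<^esub> m0)) = \<zero>\<^bsub>M\<^esub>) \<longleftrightarrow>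
        (\<forall>m\<in>carrier M. \<exists>a\<in>carrier R. \<exists>s\<in>carrier R - P. s \<odot>\<^bsub>M\<^esub> m = a \<odot>\<^bsub>M\<^esub> m0)"
    if "primeideal P R" "m0 \<in> carrier M" for P m0
    using that by (intro ball_cong) auto
  then show ?thesis
    unfolding const_rank_one_def local_basis_def by (intro iff_allI imp_cong refl) auto
qed

section \<open>Commutative rings\<close>

lemma (in comm_monoid) finprod_remove:
  assumes "finite A" "a \<in> A" "f \<in> A \<rightarrow> carrier G"
  shows "(\<Otimes>i\<in>A. f i) = f a \<otimes> (\<Otimes>i\<in>A - {a}. f i)"
proof -
  have "(\<Otimes>i\<in>A. f i) = (\<Otimes>i\<in>insert a (A - {a}). f i)" using assms(2) by (simp add: insert_absorb)
  also have "\<dots> = f a \<otimes> (\<Otimes>i\<in>A - {a}. f i)" using assms by (intro finprod_insert) auto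
  finally show ?thesis .
qed

lemmas (in abelian_monoid) finsum_remove = add.finprod_remove

lemma (in abelian_monoid) finsum_closed_subset:
  assumes "S \<subseteq> carrier G" "\<zero> \<in> S" "\<And>x y. x \<in> S \<Longrightarrow> y \<in> S \<Longrightarrow> x \<oplus> y \<in> S"
    and "h \<in> I \<rightarrow> S"
  shows "(\<Oplus>i\<in>I. h i) \<in> S"
  using assms(4)
proof (induction I rule: infinite_finite_induct)
  case (insert i I)
  then have "h \<in> I \<rightarrow> carrier G" "h i \<in> carrier G" using assms(1) by auto
  with insert show ?case using assms by (simp add: finsum_insert)
qed (use assms in simp_all)

lemma (in ring) finsum_in_ideal:
  assumes "ideal I R" "h \<in> S \<rightarrow> I"
  shows "(\<Oplus>i\<in>S. h i) \<in> I"
  using assms by (intro finsum_closed_subset)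
    (auto simp: ideal.Icarr ideal.axioms(1) additive_subgroup.a_closed
      additive_subgroup.zero_closed)

lemma (in abelian_monoid) finsum_lessThan_add:
  fixes m n :: nat
  assumes "f \<in> {..<m + n} \<rightarrow> carrier G"
  shows "(\<Oplus>i\<in>{..<m + n}. f i) = (\<Oplus>i\<in>{..<m}. f i) \<oplus> (\<Oplus>i\<in>{..<n}. f (m + i))"
proof -
  have "i \<in> (+) m ` {..<n}" if "m \<le> i" "i < m + n" for i
    using that by (intro image_eqI[of _ _ "i - m"]) auto
  then have split: "{..<m + n} = {..<m} \<union> (+) m ` {..<n}" by auto (meson leI)
  have "(\<Oplus>i\<in>{..<m + n}. f i) = (\<Oplus>i\<in>{..<m}. f i) \<oplus> (\<Oplus>i\<in>(+) m ` {..<n}. f i)"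
    using assms unfolding split by (intro finsum_Un_disjoint) auto
  also have "(\<Oplus>i\<in>(+) m ` {..<n}. f i) = (\<Oplus>i\<in>{..<n}. f (m + i))"
    using assms by (subst finsum_reindex) (auto simp: Pi_iff)
  finally show ?thesis .
qed

lemma (in cring) exists_maximalideal:
  assumes "ideal I R" "\<one> \<notin> I"
  obtains M where "maximalideal M R" "I \<subseteq> M"
proof -
  define \<I> where "\<I> = {J. ideal J R \<and> I \<subseteq> J \<and> \<one> \<notin> J}"
  have "\<exists>M\<in>\<I>. \<forall>J\<in>\<I>. M \<subseteq> J \<longrightarrow> J = M"
  proof (rule subset_Zorn_nonempty)
    show "\<I> \<noteq> {}" using assms unfolding \<I>_def by auto
    fix C assume C: "C \<noteq> {}" "subset.chain \<I> C"
    then have "ideal (\<Union>C) R"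
      using chain_Union_is_ideal[of C] unfolding \<I>_def pred_on.chain_def by auto
    with C show "\<Union>C \<in> \<I>" unfolding \<I>_def pred_on.chain_def by auto
  qed
  then obtain M where M: "M \<in> \<I>" and max: "\<And>J. J \<in> \<I> \<Longrightarrow> M \<subseteq> J \<Longrightarrow> J = M" by blast
  have "maximalideal M R"
  proof (rule maximalidealI)
    show "ideal M R" "carrier R \<noteq> M" using M unfolding \<I>_def by auto
    fix J assume J: "ideal J R" "M \<subseteq> J" "J \<subseteq> carrier R"
    show "J = M \<or> J = carrier R"
      using ideal.one_imp_carrier[OF J(1)] max[of J] J M unfolding \<I>_def by blast
  qed
  with M show ?thesis using that unfolding \<I>_def by blast
qed

lemma (in cring) unit_if_notin_maximalideals:
  assumes x: "x \<in> carrier R" and notin: "\<And>M. maximalideal M R \<Longrightarrow> x \<notin> M"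
  shows "x \<in> Units R"
proof (rule ccontr)
  assume "x \<notin> Units R"
  then have "\<one> \<notin> PIdl x"
    using x unfolding cgenideal_def Units_def by (auto simp: m_comm)
  then obtain M where "maximalideal M R" "PIdl x \<subseteq> M"
    using exists_maximalideal cgenideal_ideal[OF x] by blast
  then show False using notin cgenideal_self[OF x] by blast
qed

lemma (in cring) eq_zero_if_locally_zero:
  assumes d: "d \<in> carrier R"
    and local: "\<And>M. maximalideal M R \<Longrightarrow> \<exists>s\<in>carrier R - M. s \<otimes> d = \<zero>"
  shows "d = \<zero>"
proof (rule ccontr)
  assume "d \<noteq> \<zero>"
  define Ann where "Ann = {s \<in> carrier R. s \<otimes> d = \<zero>}"
  have "ideal Ann R"
  proof (rule idealI)
    show "subgroup Ann (add_monoid R)"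
      by (rule add.subgroupI) (auto simp: Ann_def d l_distr l_minus a_inv_def[symmetric])
    show "x \<otimes> a \<in> Ann" "a \<otimes> x \<in> Ann" if "a \<in> Ann" "x \<in> carrier R" for a x
    proof -
      have a: "a \<in> carrier R" "a \<otimes> d = \<zero>" using that(1) by (auto simp: Ann_def)
      then have "x \<otimes> a \<otimes> d = \<zero>" using that(2) d by (simp add: m_assoc)
      then show "x \<otimes> a \<in> Ann" "a \<otimes> x \<in> Ann" using a that(2) by (auto simp: Ann_def m_comm)
    qed
  qed (rule ring_axioms)
  moreover have "\<one> \<notin> Ann" using \<open>d \<noteq> \<zero>\<close> d by (simp add: Ann_def)
  ultimately obtain M where "maximalideal M R" "Ann \<subseteq> M" by (rule exists_maximalideal)
  then show False using local unfolding Ann_def by blast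
qed

lemma (in cring) finprod_notin_primeideal:
  assumes P: "primeideal P R" and "h \<in> S \<rightarrow> carrier R - P"
  shows "(\<Otimes>i\<in>S. h i) \<notin> P"
  using assms(2)
proof (induction S rule: infinite_finite_induct)
  case (insert i S)
  then show ?case using primeideal.I_prime[OF P, of "h i" "\<Otimes>i\<in>S. h i"]
    by (auto simp: finprod_insert Pi_iff)
qed (use primeideal.I_notcarr[OF P] ideal.one_imp_carrier[OF primeideal.axioms(1)[OF P]] in auto)

lemma (in cring) maximalideals_separating_elements:
  assumes fin: "finite {M. maximalideal M R}"
  obtains e where "\<And>M. maximalideal M R \<Longrightarrow> e M \<in> carrier R - M"
    and "\<And>M M'. maximalideal M R \<Longrightarrow> maximalideal M' R \<Longrightarrow> M' \<noteq> M \<Longrightarrow> e M \<in> M'"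
proof -
  have "\<exists>a. a \<in> M' - M" if "maximalideal M R" "maximalideal M' R" "M' \<noteq> M" for M M'
  proof -
    have "\<not> M' \<subseteq> M"
      using maximalideal.I_maximal[OF that(2) maximalideal.axioms(1)[OF that(1)]]
        maximalideal.I_notcarr[OF that(1)] ideal.Icarr[OF maximalideal.axioms(1)[OF that(1)]]
        that(3)
      by blast
    then show ?thesis by blast
  qed
  then obtain sep where sep: "\<And>M M'. maximalideal M R \<Longrightarrow> maximalideal M' R \<Longrightarrow> M' \<noteq> M \<Longrightarrow>
      sep M M' \<in> M' - M"
    by metis
  have sep_carrier: "sep M M' \<in> carrier R"
    if "maximalideal M R" "maximalideal M' R" "M' \<noteq> M" for M M'
    using sep[OF that] ideal.Icarr[OF maximalideal.axioms(1)[OF that(2)]] by blast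
  define e where "e M = (\<Otimes>M'\<in>{M'. maximalideal M' R} - {M}. sep M M')" for M
  show ?thesis
  proof
    fix M assume M: "maximalideal M R"
    show "e M \<in> carrier R - M"
      unfolding e_def using M sep sep_carrier
      by (auto intro!: finprod_closed finprod_notin_primeideal[OF maximalideal_prime[OF M]])
  next
    fix M M' assume M: "maximalideal M R" and M': "maximalideal M' R" "M' \<noteq> M"
    have "e M = sep M M' \<otimes> (\<Otimes>M''\<in>{M'. maximalideal M' R} - {M} - {M'}. sep M M'')"
      unfolding e_def using fin M M' sep_carrier by (intro finprod_remove) auto
    then show "e M \<in> M'"
      using M M' sep sep_carrier
      by (auto intro!: ideal.I_r_closed maximalideal.axioms(1) finprod_closed)
  qed
qed

lemma (in cring) finsum_separated_notin:
  assumes P: "primeideal P R" and S: "finite S" "P \<in> S"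
    and e: "e \<in> S \<rightarrow> carrier R" "e P \<notin> P" "\<And>Q. Q \<in> S - {P} \<Longrightarrow> e Q \<in> P"
    and c: "c \<in> S \<rightarrow> carrier R" "c P \<notin> P"
  shows "(\<Oplus>Q\<in>S. e Q \<otimes> c Q) \<notin> P"
proof
  interpret primeideal P R by fact
  define rest where "rest = (\<Oplus>Q\<in>S - {P}. e Q \<otimes> c Q)"
  have rest: "rest \<in> P"
    unfolding rest_def using e(3) c(1)
    by (intro finsum_in_ideal[OF is_ideal]) (auto intro: I_r_closed)
  have "(\<Oplus>Q\<in>S. e Q \<otimes> c Q) = e P \<otimes> c P \<oplus> rest"
    unfolding rest_def using S e(1) c(1) by (intro finsum_remove) auto
  moreover assume "(\<Oplus>Q\<in>S. e Q \<otimes> c Q) \<in> P"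
  ultimately have "(e P \<otimes> c P \<oplus> rest) \<oplus> \<ominus> rest \<in> P"
    using rest by (simp add: a_closed a_inv_closed)
  moreover have "(e P \<otimes> c P \<oplus> rest) \<oplus> \<ominus> rest = e P \<otimes> c P"
    using e(1) c(1) S(2) Icarr[OF rest] by (simp add: Pi_iff a_assoc r_neg)
  ultimately have "e P \<otimes> c P \<in> P" by simp
  then show False using I_prime e c S(2) by blast
qed

section \<open>Submodules of a ring extension\<close>

locale ring_extension = cring B for B :: "'a ring" (structure) +
  fixes A :: "'a set"
  assumes subring_A: "subring A B"

begin

lemma A_subset: "A \<subseteq> carrier B"
  using subringE(1)[OF subring_A] .

lemma A_closed [simp]:
  "a \<in> A \<Longrightarrow> a \<in> carrier B"
  "\<zero> \<in> A"
  "\<one> \<in> A"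
  "a \<in> A \<Longrightarrow> \<ominus> a \<in> A"
  "a \<in> A \<Longrightarrow> b \<in> A \<Longrightarrow> a \<otimes> b \<in> A"
  "a \<in> A \<Longrightarrow> b \<in> A \<Longrightarrow> a \<oplus> b \<in> A"
  using A_subset subringE[OF subring_A] by auto

lemma cring_subring_ring: "cring (subring_ring B A)"
  using subcring_iff[OF A_subset] subcringI'[OF subring_A] unfolding subring_ring_def by simp

lemma primeideal_contract:
  assumes "maximalideal Q B"
  shows "primeideal (Q \<inter> A) (subring_ring B A)"
proof -
  have "ring_hom_ring (subring_ring B A) B id"
    using cring_subring_ring A_subset
    by (intro ring_hom_ringI2) (auto simp: ring_hom_def cring.axioms(1) ring_axioms)
  then have "primeideal {a \<in> carrier (subring_ring B A). id a \<in> Q} (subring_ring B A)"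
    using ring_hom_ring.primeideal_vimage maximalideal_prime[OF assms] cring_subring_ring by blast
  moreover have "{a \<in> carrier (subring_ring B A). id a \<in> Q} = Q \<inter> A" by auto
  ultimately show ?thesis by simp
qed

lemma primeideal_subring_ringD:
  assumes P: "primeideal P (subring_ring B A)"
  shows "P \<subseteq> A" "\<zero> \<in> P" "\<one> \<notin> P"
    and "\<And>a b. a \<in> P \<Longrightarrow> b \<in> P \<Longrightarrow> a \<oplus> b \<in> P"
    and "\<And>a p. a \<in> A \<Longrightarrow> p \<in> P \<Longrightarrow> a \<otimes> p \<in> P"
    and "\<And>a b. a \<in> A \<Longrightarrow> b \<in> A \<Longrightarrow> a \<otimes> b \<in> P \<Longrightarrow> a \<in> P \<or> b \<in> P"
proof -
  note ideal = primeideal.axioms(1)[OF P]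
  note subgroup = ideal.axioms(1)[OF ideal]
  show "P \<subseteq> A" using additive_subgroup.a_subset[OF subgroup] by simp
  show "\<zero> \<in> P" using additive_subgroup.zero_closed[OF subgroup] by simp
  show "\<one> \<notin> P"
    using primeideal.I_notcarr[OF P] ideal.one_imp_carrier[OF ideal] by auto
  show "\<And>a b. a \<in> P \<Longrightarrow> b \<in> P \<Longrightarrow> a \<oplus> b \<in> P"
    using additive_subgroup.a_closed[OF subgroup] by simp
  show "\<And>a p. a \<in> A \<Longrightarrow> p \<in> P \<Longrightarrow> a \<otimes> p \<in> P"
    using ideal.I_l_closed[OF ideal] by simp
  show "\<And>a b. a \<in> A \<Longrightarrow> b \<in> A \<Longrightarrow> a \<otimes> b \<in> P \<Longrightarrow> a \<in> P \<or> b \<in> P"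
    using primeideal.I_prime[OF P] by simp
qed

lemma submoduleD:
  assumes "is_A_submodule B A L"
  shows submodule_subset: "L \<subseteq> carrier B"
    and submodule_zero: "\<zero> \<in> L"
    and submodule_add: "\<And>x y. x \<in> L \<Longrightarrow> y \<in> L \<Longrightarrow> x \<oplus> y \<in> L"
    and submodule_a_inv: "\<And>x. x \<in> L \<Longrightarrow> \<ominus> x \<in> L"
    and submodule_smult: "\<And>a x. a \<in> A \<Longrightarrow> x \<in> L \<Longrightarrow> a \<otimes> x \<in> L"
  using assms unfolding is_A_submodule_def by auto

lemma submodule_finsum:
  assumes "is_A_submodule B A L" "h \<in> I \<rightarrow> L"
  shows "(\<Oplus>i\<in>I. h i) \<in> L"
  using assms submoduleD[OF assms(1)] by (intro finsum_closed_subset) auto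

lemma submodule_module:
  assumes L: "is_A_submodule B A L"
  shows "module (subring_ring B A) (submod_as_module B L)"
proof (rule moduleI)
  note L = submoduleD[OF L]
  show "abelian_group (submod_as_module B L)"
  proof (rule abelian_groupI)
    show "\<exists>y\<in>carrier (submod_as_module B L). y \<oplus>\<^bsub>submod_as_module B L\<^esub> x = \<zero>\<^bsub>submod_as_module B L\<^esub>"
      if "x \<in> carrier (submod_as_module B L)" for x
      using that L by (intro bexI[of _ "\<ominus> x"]) (auto simp: l_neg subsetD)
  qed (use L in \<open>auto simp: a_ac subsetD\<close>)
qed (use submoduleD[OF L] cring_subring_ring in \<open>auto simp: subsetD l_distr r_distr m_assoc\<close>)

lemma submodule_finsum_eq:
  assumes L: "is_A_submodule B A L" and h: "h \<in> I \<rightarrow> L"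
  shows "(\<Oplus>\<^bsub>submod_as_module B L\<^esub>i\<in>I. h i) = (\<Oplus>i\<in>I. h i)"
proof -
  interpret L: module "subring_ring B A" "submod_as_module B L" by (rule submodule_module[OF L])
  from h show ?thesis
  proof (induction I rule: infinite_finite_induct)
    case (insert i I)
    then show ?case
      using submodule_finsum[OF L, of h I] submodule_subset[OF L]
      by (auto simp: Pi_iff finsum_insert L.M.finsum_insert subsetD)
  qed simp_all
qed

lemma submodule_lin_map_finsum:
  assumes L: "is_A_submodule B A L" and N: "module (subring_ring B A) N"
    and f: "lin_map (subring_ring B A) (submod_as_module B L) N f"
    and "finite I" "c \<in> I \<rightarrow> A" "z \<in> I \<rightarrow> L"
  shows "f (\<Oplus>i\<in>I. c i \<otimes> z i) = (\<Oplus>\<^bsub>N\<^esub>i\<in>I. c i \<odot>\<^bsub>N\<^esub> f (z i))"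
proof -
  interpret L: module "subring_ring B A" "submod_as_module B L" by (rule submodule_module[OF L])
  have "(\<Oplus>i\<in>I. c i \<otimes> z i) = (\<Oplus>\<^bsub>submod_as_module B L\<^esub>i\<in>I. c i \<odot>\<^bsub>submod_as_module B L\<^esub> z i)"
    using submodule_finsum_eq[OF L, of "\<lambda>i. c i \<otimes> z i" I] submoduleD(5)[OF L] assms(5,6)
    by (auto simp: Pi_iff)
  then show ?thesis using L.lin_map_finsum[OF f N assms(4)] assms(5,6) by simp
qed

lemma prod_submod_subset:
  assumes "L \<subseteq> carrier B" "L' \<subseteq> carrier B"
  shows "prod_submod B L L' \<subseteq> carrier B"
proof
  show "z \<in> carrier B" if "z \<in> prod_submod B L L'" for z
    using that by (induction rule: prod_submod.induct) (use assms in auto)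
qed

lemma prod_submod_submodule:
  assumes L: "is_A_submodule B A L" and L': "is_A_submodule B A L'"
  shows "is_A_submodule B A (prod_submod B L L')"
proof -
  note L = submoduleD[OF L] and L' = submoduleD[OF L']
  note carrier = prod_submod_subset[OF L(1) L'(1)]
  have "\<ominus> z \<in> prod_submod B L L' \<and> (\<forall>a\<in>A. a \<otimes> z \<in> prod_submod B L L')"
    if "z \<in> prod_submod B L L'" for z
    using that
  proof (induction rule: prod_submod.induct)
    case (prod x y)
    have "\<ominus> (x \<otimes> y) = (\<ominus> x) \<otimes> y" "\<And>a. a \<in> A \<Longrightarrow> a \<otimes> (x \<otimes> y) = (a \<otimes> x) \<otimes> y"
      using prod L(1) L'(1) by (auto simp: l_minus m_assoc subsetD)
    then show ?case using prod L(4,5) by (auto intro: prod_submod.prod)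
  next
    case (add u v)
    have "\<ominus> (u \<oplus> v) = \<ominus> u \<oplus> \<ominus> v" "\<And>a. a \<in> A \<Longrightarrow> a \<otimes> (u \<oplus> v) = a \<otimes> u \<oplus> a \<otimes> v"
      using add.hyps carrier by (auto simp: minus_add r_distr subsetD)
    then show ?case using add.IH by (auto intro: prod_submod.add)
  qed (auto intro: prod_submod.zero)
  then show ?thesis
    unfolding is_A_submodule_def using carrier by (auto intro: prod_submod.zero prod_submod.add)
qed

lemma prod_submod_finsum_rep:
  assumes "L \<subseteq> carrier B" "L' \<subseteq> carrier B" "z \<in> prod_submod B L L'"
  shows "\<exists>(n::nat) x y. (\<forall>i<n. x i \<in> L \<and> y i \<in> L') \<and> z = (\<Oplus>i\<in>{..<n}. x i \<otimes> y i)"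
  using assms(3)
proof (induction rule: prod_submod.induct)
  case zero
  show ?case by (intro exI[of _ "0::nat"]) simp
next
  case (prod a b)
  show ?case
    by (rule exI[of _ "1::nat"], rule exI[of _ "\<lambda>_. a"], rule exI[of _ "\<lambda>_. b"])
      (use prod assms in \<open>auto simp: subsetD lessThan_Suc finsum_insert\<close>)
next
  case (add u v)
  then obtain n n' :: nat and x y x' y' where
    u: "\<forall>i<n. x i \<in> L \<and> y i \<in> L'" "u = (\<Oplus>i\<in>{..<n}. x i \<otimes> y i)" and
    v: "\<forall>i<n'. x' i \<in> L \<and> y' i \<in> L'" "v = (\<Oplus>i\<in>{..<n'}. x' i \<otimes> y' i)"
    by blast
  define x'' where "x'' i = (if i < n then x i else x' (i - n))" for i
  define y'' where "y'' i = (if i < n then y i else y' (i - n))" for i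
  have xy: "\<forall>i<n + n'. x'' i \<in> L \<and> y'' i \<in> L'"
    using u v by (auto simp: x''_def y''_def)
  have "(\<Oplus>i\<in>{..<n}. x'' i \<otimes> y'' i) = u" "(\<Oplus>i\<in>{..<n'}. x'' (n + i) \<otimes> y'' (n + i)) = v"
    unfolding u v using u v assms(1,2) by (auto simp: x''_def y''_def subsetD intro!: finsum_cong)
  moreover have "(\<Oplus>i\<in>{..<n + n'}. x'' i \<otimes> y'' i) =
      (\<Oplus>i\<in>{..<n}. x'' i \<otimes> y'' i) \<oplus> (\<Oplus>i\<in>{..<n'}. x'' (n + i) \<otimes> y'' (n + i))"
    using xy assms(1,2) by (intro finsum_lessThan_add) (auto simp: subsetD)
  ultimately show ?case using xy by metis
qed

lemma prod_submod_principal: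
  assumes L: "is_A_submodule B A L" and x: "x \<in> carrier B"
  shows "prod_submod B L (principal_submod B A x) = (\<lambda>m. m \<otimes> x) ` L"
proof
  note L = submoduleD[OF L]
  show "prod_submod B L (principal_submod B A x) \<subseteq> (\<lambda>m. m \<otimes> x) ` L"
  proof
    fix z assume "z \<in> prod_submod B L (principal_submod B A x)"
    then show "z \<in> (\<lambda>m. m \<otimes> x) ` L"
    proof (induction rule: prod_submod.induct)
      case zero
      show ?case using L(2) x by (auto intro!: image_eqI[of _ _ \<zero>])
    next
      case (prod m y)
      then obtain a where "a \<in> A" "y = a \<otimes> x" unfolding principal_submod_def by blast
      then show ?case
        using prod L(1,5) x by (auto simp: m_ac subsetD intro!: image_eqI[of _ _ "a \<otimes> m"])
    next
      case (add u v)
      then obtain m m' where "m \<in> L" "m' \<in> L" "u = m \<otimes> x" "v = m' \<otimes> x" by blast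
      then show ?case
        using L(1,3) x by (auto simp: l_distr subsetD intro!: image_eqI[of _ _ "m \<oplus> m'"])
    qed
  qed
  have "x \<in> principal_submod B A x"
    unfolding principal_submod_def using x by (auto intro!: exI[of _ \<one>])
  then show "(\<lambda>m. m \<otimes> x) ` L \<subseteq> prod_submod B L (principal_submod B A x)"
    by (auto intro: prod_submod.prod)
qed

lemma prod_submod_bilin_map:
  assumes L: "is_A_submodule B A L" and K: "is_A_submodule B A K"
  shows "bilin_map (subring_ring B A) (submod_as_module B L) (submod_as_module B K)
    (submod_as_module B (prod_submod B L K)) (\<lambda>m k. m \<otimes> k)"
  using submodule_subset[OF L] submodule_subset[OF K]
  unfolding bilin_map_def
  by (auto simp: subsetD r_distr l_distr m_assoc m_lcomm intro!: lin_mapI prod_submod.prod)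

lemma prod_submod_lin_map_eq:
  assumes L: "is_A_submodule B A L" and K: "is_A_submodule B A K"
    and N: "module (subring_ring B A) N"
    and h: "lin_map (subring_ring B A) (submod_as_module B (prod_submod B L K)) N h"
    and h': "lin_map (subring_ring B A) (submod_as_module B (prod_submod B L K)) N h'"
    and eq: "\<And>m k. m \<in> L \<Longrightarrow> k \<in> K \<Longrightarrow> h (m \<otimes> k) = h' (m \<otimes> k)"
    and z: "z \<in> prod_submod B L K"
  shows "h z = h' z"
  using z
proof (induction rule: prod_submod.induct)
  case zero
  note LK = submodule_module[OF prod_submod_submodule[OF L K]]
  show ?case using lin_map_zero[OF h LK N] lin_map_zero[OF h' LK N] by simp
next
  case (add u v)
  then show ?case using lin_map_add[OF h, of u v] lin_map_add[OF h', of u v] by simp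
qed (rule eq)

lemma prod_submod_mult_in:
  assumes L: "is_A_submodule B A L" and K: "is_A_submodule B A K" and L': "L' \<subseteq> carrier B"
    and LL': "\<And>m l. m \<in> L \<Longrightarrow> l \<in> L' \<Longrightarrow> m \<otimes> l \<in> A"
    and l: "l \<in> L'" and z: "z \<in> prod_submod B L K"
  shows "z \<otimes> l \<in> K"
  using z
proof (induction rule: prod_submod.induct)
  case zero
  show ?case using l L' submodule_zero[OF K] by (simp add: subsetD)
next
  case (prod m k)
  have "m \<otimes> k \<otimes> l = (m \<otimes> l) \<otimes> k"
    using prod l L' submodule_subset[OF L] submodule_subset[OF K] by (simp add: m_ac subsetD)
  then show ?case using submodule_smult[OF K] LL' prod l by simp
next
  case (add u v)
  have "(u \<oplus> v) \<otimes> l = u \<otimes> l \<oplus> v \<otimes> l"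
    using add.hyps l L' prod_submod_subset[OF submodule_subset[OF L] submodule_subset[OF K]]
    by (simp add: l_distr subsetD)
  then show ?case using add.IH submodule_add[OF K] by simp
qed

lemma mod_iso_mult_unit:
  assumes L: "is_A_submodule B A L" and u: "u \<in> Units B"
  shows "mod_iso (subring_ring B A) (submod_as_module B L) (submod_as_module B ((\<lambda>m. m \<otimes> u) ` L))"
  unfolding mod_iso_def
proof (intro exI conjI)
  have L_carrier: "m \<in> L \<Longrightarrow> m \<in> carrier B" for m using submodule_subset[OF L] by blast
  show "lin_map (subring_ring B A) (submod_as_module B L) (submod_as_module B ((\<lambda>m. m \<otimes> u) ` L))
      (\<lambda>m. m \<otimes> u)"
    using Units_closed[OF u] L_carrier by (intro lin_mapI) (auto simp: l_distr m_assoc)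
  have "inj_on (\<lambda>m. m \<otimes> u) L"
    using u L_carrier by (intro inj_onI) (simp add: m_comm[of _ u] Units_closed)
  then show "bij_betw (\<lambda>m. m \<otimes> u) (carrier (submod_as_module B L))
      (carrier (submod_as_module B ((\<lambda>m. m \<otimes> u) ` L)))"
    by (simp add: bij_betw_def)
qed

lemma invertible_ideal_submodule:
  "invertible_ideal B A L \<Longrightarrow> is_A_submodule B A L"
  unfolding invertible_ideal_def by blast

end

section \<open>Invertible ideals\<close>

locale dual_basis = ring_extension +
  fixes L L' :: "'a set" and n :: nat and x y :: "nat \<Rightarrow> 'a"
  assumes submodule_L: "is_A_submodule B A L"
    and submodule_L': "is_A_submodule B A L'"
    and prod_eq_A: "prod_submod B L L' = A"
    and x_in_L: "\<And>i. i < n \<Longrightarrow> x i \<in> L"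
    and y_in_L': "\<And>i. i < n \<Longrightarrow> y i \<in> L'"
    and sum_eq_one: "(\<Oplus>i\<in>{..<n}. x i \<otimes> y i) = \<one>"

lemma (in ring_extension) invertible_ideal_dual_basis:
  assumes "invertible_ideal B A L"
  obtains L' n x y where "dual_basis B A L L' n x y"
proof -
  obtain L' where L: "is_A_submodule B A L" "is_A_submodule B A L'" "prod_submod B L L' = A"
    using assms unfolding invertible_ideal_def by blast
  have "\<one> \<in> prod_submod B L L'" using L(3) by simp
  then obtain n :: nat and x y where "\<forall>i<n. x i \<in> L \<and> y i \<in> L'" "\<one> = (\<Oplus>i\<in>{..<n}. x i \<otimes> y i)"
    using prod_submod_finsum_rep[OF submodule_subset[OF L(1)] submodule_subset[OF L(2)]] by blast
  with L show ?thesis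
    by (intro that) (unfold_locales, auto)
qed

context dual_basis
begin

lemma L_carrier [simp]: "m \<in> L \<Longrightarrow> m \<in> carrier B"
  using submodule_subset[OF submodule_L] by blast

lemma L'_carrier [simp]: "l \<in> L' \<Longrightarrow> l \<in> carrier B"
  using submodule_subset[OF submodule_L'] by blast

lemma x_carrier [simp]: "i < n \<Longrightarrow> x i \<in> carrier B"
  and y_carrier [simp]: "i < n \<Longrightarrow> y i \<in> carrier B"
  using x_in_L y_in_L' by auto

lemma mult_in_A: "m \<in> L \<Longrightarrow> l \<in> L' \<Longrightarrow> m \<otimes> l \<in> A"
  using prod_submod.prod[of m L l L' B] prod_eq_A by simp

lemma expansion:
  assumes m: "m \<in> L"
  shows "(\<Oplus>i\<in>{..<n}. (m \<otimes> y i) \<otimes> x i) = m"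
proof -
  have "(\<Oplus>i\<in>{..<n}. (m \<otimes> y i) \<otimes> x i) = (\<Oplus>i\<in>{..<n}. m \<otimes> (x i \<otimes> y i))"
    using m by (intro finsum_cong) (auto simp: m_ac)
  also have "\<dots> = m" using m by (simp add: finsum_rdistr[symmetric] sum_eq_one)
  finally show ?thesis .
qed

lemma fg_projective: "fg_projective (subring_ring B A) (submod_as_module B L)"
proof -
  define f where "f m = (\<lambda>i. if i < n then m \<otimes> y i else \<zero>)" for m
  define g where "g v = (\<Oplus>i\<in>{..<n}. v i \<otimes> x i)" for v
  have "lin_map (subring_ring B A) (submod_as_module B L) (free_module (subring_ring B A) n) f"
    using mult_in_A y_in_L' by (intro lin_mapI) (auto simp: f_def l_distr m_assoc)
  moreover have
    "lin_map (subring_ring B A) (free_module (subring_ring B A) n) (submod_as_module B L) g"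
  proof (rule lin_mapI)
    show "g \<in> carrier (free_module (subring_ring B A) n) \<rightarrow> carrier (submod_as_module B L)"
      unfolding g_def using submoduleD(5)[OF submodule_L] x_in_L
      by (auto intro!: submodule_finsum[OF submodule_L])
  next
    fix v w
    assume "v \<in> carrier (free_module (subring_ring B A) n)"
      and "w \<in> carrier (free_module (subring_ring B A) n)"
    then have vw: "\<forall>i<n. v i \<in> A" "\<forall>i<n. w i \<in> A" by auto
    have "g (\<lambda>i. v i \<oplus> w i) = (\<Oplus>i\<in>{..<n}. v i \<otimes> x i \<oplus> w i \<otimes> x i)"
      unfolding g_def using vw by (intro finsum_cong') (auto simp: l_distr)
    also have "\<dots> = g v \<oplus> g w" unfolding g_def using vw by (intro finsum_addf) auto
    finally show "g (v \<oplus>\<^bsub>free_module (subring_ring B A) n\<^esub> w) = g v \<oplus>\<^bsub>submod_as_module B L\<^esub> g w"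
      by simp
  next
    fix a v assume "a \<in> carrier (subring_ring B A)" "v \<in> carrier (free_module (subring_ring B A) n)"
    then have av: "a \<in> A" "\<forall>i<n. v i \<in> A" by auto
    have "g (\<lambda>i. a \<otimes> v i) = (\<Oplus>i\<in>{..<n}. a \<otimes> (v i \<otimes> x i))"
      unfolding g_def using av by (intro finsum_cong') (auto simp: m_assoc)
    also have "\<dots> = a \<otimes> g v" unfolding g_def using av by (intro finsum_rdistr[symmetric]) auto
    finally show "g (a \<odot>\<^bsub>free_module (subring_ring B A) n\<^esub> v) = a \<odot>\<^bsub>submod_as_module B L\<^esub> g v"
      by simp
  qed
  moreover have "g (f m) = m" if "m \<in> L" for m
  proof -
    have "g (f m) = (\<Oplus>i\<in>{..<n}. (m \<otimes> y i) \<otimes> x i)"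
      unfolding f_def g_def using that by (intro finsum_cong') auto
    then show ?thesis using expansion[OF that] by simp
  qed
  ultimately show ?thesis unfolding fg_projective_def by auto
qed

lemma const_rank_one: "const_rank_one (subring_ring B A) (submod_as_module B L)"
  unfolding module.const_rank_one_iff[OF submodule_module[OF submodule_L]]
proof (intro allI impI)
  fix P assume P: "primeideal P (subring_ring B A)"
  note P = primeideal_subring_ringD[OF P]
  have "P \<subseteq> carrier B" using P(1) A_subset by blast
  then obtain j where j: "j < n" "x j \<otimes> y j \<notin> P"
    using finsum_closed_subset[of P "\<lambda>i. x i \<otimes> y i" "{..<n}"] P(2-4) sum_eq_one by auto
  define s where "s = x j \<otimes> y j"
  have s: "s \<in> A" "s \<notin> P" using j mult_in_A x_in_L y_in_L' by (auto simp: s_def)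
  show "\<exists>m0. local_basis (subring_ring B A) (submod_as_module B L) P m0"
    unfolding local_basis_def
  proof (intro exI[of _ "x j"] conjI ballI impI)
    show "x j \<in> carrier (submod_as_module B L)" using x_in_L j by simp
  next
    fix m assume "m \<in> carrier (submod_as_module B L)"
    then have m: "m \<in> L" "s \<otimes> m = (m \<otimes> y j) \<otimes> x j" using j by (auto simp: s_def m_ac)
    then show "\<exists>a\<in>carrier (subring_ring B A). \<exists>s\<in>carrier (subring_ring B A) - P.
        s \<odot>\<^bsub>submod_as_module B L\<^esub> m = a \<odot>\<^bsub>submod_as_module B L\<^esub> x j"
      using s j mult_in_A[OF m(1) y_in_L'] by (intro bexI[of _ "m \<otimes> y j"] bexI[of _ s]) auto
  next
    fix a assume a: "a \<in> carrier (subring_ring B A)"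
      and "\<exists>t\<in>carrier (subring_ring B A) - P.
        t \<odot>\<^bsub>submod_as_module B L\<^esub> (a \<odot>\<^bsub>submod_as_module B L\<^esub> x j) = \<zero>\<^bsub>submod_as_module B L\<^esub>"
    then obtain t where t: "t \<in> A" "t \<notin> P" "t \<otimes> (a \<otimes> x j) = \<zero>" by auto
    have "(t \<otimes> s) \<otimes> a = (t \<otimes> (a \<otimes> x j)) \<otimes> y j" using a t(1) j by (simp add: s_def m_ac)
    also have "\<dots> = \<zero>" using t j by simp
    finally have "(t \<otimes> s) \<otimes> a = \<zero>" .
    moreover have "t \<otimes> s \<notin> P" using P(6) t s by blast
    ultimately show "\<exists>t\<in>carrier (subring_ring B A) - P. t \<otimes>\<^bsub>subring_ring B A\<^esub> a = \<zero>\<^bsub>subring_ring B A\<^esub>"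
      using t s by (intro bexI[of _ "t \<otimes> s"]) auto
  qed
qed

lemma lin_map_is_mult:
  assumes N: "is_A_submodule B A N"
    and f: "lin_map (subring_ring B A) (submod_as_module B L) (submod_as_module B N) f"
  obtains u where "u \<in> carrier B" "\<And>m. m \<in> L \<Longrightarrow> f m = m \<otimes> u"
proof
  have fN: "f m \<in> N" if "m \<in> L" for m using lin_map_closed[OF f] that by simp
  then have fB: "f m \<in> carrier B" if "m \<in> L" for m using that submodule_subset[OF N] by blast
  show "(\<Oplus>i\<in>{..<n}. y i \<otimes> f (x i)) \<in> carrier B" using fB x_in_L by auto
  fix m assume m: "m \<in> L"
  have "f m = f (\<Oplus>i\<in>{..<n}. (m \<otimes> y i) \<otimes> x i)" using expansion[OF m] by simp
  also have "\<dots> = (\<Oplus>\<^bsub>submod_as_module B N\<^esub>i\<in>{..<n}. (m \<otimes> y i) \<otimes> f (x i))"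
    using submodule_lin_map_finsum[OF submodule_L submodule_module[OF N] f,
        of "{..<n}" "\<lambda>i. m \<otimes> y i" x]
      m mult_in_A x_in_L y_in_L' by simp
  also have "\<dots> = (\<Oplus>i\<in>{..<n}. (m \<otimes> y i) \<otimes> f (x i))"
    using submoduleD(5)[OF N] m mult_in_A x_in_L y_in_L' fN
    by (intro submodule_finsum_eq[OF N]) auto
  also have "\<dots> = (\<Oplus>i\<in>{..<n}. m \<otimes> (y i \<otimes> f (x i)))"
    using m x_in_L fB by (intro finsum_cong') (auto simp: m_assoc)
  also have "\<dots> = m \<otimes> (\<Oplus>i\<in>{..<n}. y i \<otimes> f (x i))"
    using m fB x_in_L by (intro finsum_rdistr[symmetric]) auto
  finally show "f m = m \<otimes> (\<Oplus>i\<in>{..<n}. y i \<otimes> f (x i))" .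
qed

lemma unit_if_image_mult_eq:
  assumes N: "N \<subseteq> carrier B" and u: "u \<in> carrier B" and L_eq: "L = (\<lambda>m. m \<otimes> u) ` N"
  shows "u \<in> Units B"
proof -
  have "\<forall>i. \<exists>m. i < n \<longrightarrow> m \<in> N \<and> x i = m \<otimes> u"
    using x_in_L L_eq by blast
  then obtain m where m: "\<And>i. i < n \<Longrightarrow> m i \<in> N \<and> x i = m i \<otimes> u" by metis
  then have m_carrier: "\<And>i. i < n \<Longrightarrow> m i \<in> carrier B" using N by blast
  have "\<one> = (\<Oplus>i\<in>{..<n}. u \<otimes> (m i \<otimes> y i))"
    unfolding sum_eq_one[symmetric] using m m_carrier u by (intro finsum_cong') (auto simp: m_ac)
  also have "\<dots> = u \<otimes> (\<Oplus>i\<in>{..<n}. m i \<otimes> y i)"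
    using m_carrier u by (intro finsum_rdistr[symmetric]) auto
  finally have "u \<otimes> (\<Oplus>i\<in>{..<n}. m i \<otimes> y i) = \<one>" by simp
  then show ?thesis
    using u m_carrier unfolding Units_def
    by (auto simp: m_comm intro!: bexI[of _ "\<Oplus>i\<in>{..<n}. m i \<otimes> y i"])
qed

lemma mult_y_in:
  assumes K: "is_A_submodule B A K" and z: "z \<in> prod_submod B L K" and i: "i < n"
  shows "z \<otimes> y i \<in> K"
  using prod_submod_mult_in[OF submodule_L K _ mult_in_A y_in_L' z] i
    submodule_subset[OF submodule_L'] by blast

definition tensor_lift where
  "tensor_lift N \<beta> K z =
    (if z \<in> prod_submod B L K then \<Oplus>\<^bsub>N\<^esub>i\<in>{..<n}. \<beta> (x i) (z \<otimes> y i) else undefined)"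

lemma tensor_lift_extensional: "tensor_lift N \<beta> K \<in> extensional (prod_submod B L K)"
  by (simp add: tensor_lift_def extensional_def)

lemma tensor_lift_lin_map:
  assumes K: "is_A_submodule B A K" and N: "module (subring_ring B A) N"
    and \<beta>: "bilin_map (subring_ring B A) (submod_as_module B L) (submod_as_module B K) N \<beta>"
  shows "lin_map (subring_ring B A) (submod_as_module B (prod_submod B L K)) N (tensor_lift N \<beta> K)"
proof -
  interpret N: module "subring_ring B A" N by fact
  let ?LK = "prod_submod B L K" and ?h = "tensor_lift N \<beta> K"
  note zy = mult_y_in[OF K] and closed = bilin_map_closed[OF \<beta>]
  have LK: "?LK \<subseteq> carrier B"
    using prod_submod_subset[OF submodule_subset[OF submodule_L] submodule_subset[OF K]] .
  show ?thesis
  proof (rule lin_mapI)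
    show "?h \<in> carrier (submod_as_module B ?LK) \<rightarrow> carrier N"
      using closed x_in_L zy by (auto simp: tensor_lift_def intro!: N.M.finsum_closed)
  next
    fix z z' assume "z \<in> carrier (submod_as_module B ?LK)" "z' \<in> carrier (submod_as_module B ?LK)"
    then have z: "z \<in> ?LK" "z' \<in> ?LK" by simp_all
    have "?h (z \<oplus> z') = (\<Oplus>\<^bsub>N\<^esub>i\<in>{..<n}. \<beta> (x i) (z \<otimes> y i) \<oplus>\<^bsub>N\<^esub> \<beta> (x i) (z' \<otimes> y i))"
      unfolding tensor_lift_def using z zy x_in_L LK closed
      by (auto simp: l_distr subsetD bilin_map_add_right[OF \<beta>] simp del: N.M.add.finprod_multf
          intro!: N.M.finsum_cong' prod_submod.add)
    also have "\<dots> = ?h z \<oplus>\<^bsub>N\<^esub> ?h z'"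
      unfolding tensor_lift_def using z zy x_in_L closed by (auto intro!: N.M.finsum_addf)
    finally show "?h (z \<oplus>\<^bsub>submod_as_module B ?LK\<^esub> z') = ?h z \<oplus>\<^bsub>N\<^esub> ?h z'" by simp
  next
    fix a z assume "a \<in> carrier (subring_ring B A)" "z \<in> carrier (submod_as_module B ?LK)"
    then have az: "a \<in> A" "z \<in> ?LK" by simp_all
    then have "a \<otimes> z \<in> ?LK"
      using submodule_smult[OF prod_submod_submodule[OF submodule_L K]] by blast
    then have "?h (a \<otimes> z) = (\<Oplus>\<^bsub>N\<^esub>i\<in>{..<n}. a \<odot>\<^bsub>N\<^esub> \<beta> (x i) (z \<otimes> y i))"
      unfolding tensor_lift_def using az zy x_in_L LK closed
      by (auto simp: m_assoc subsetD bilin_map_smult_right[OF \<beta>] intro!: N.M.finsum_cong')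
    also have "\<dots> = a \<odot>\<^bsub>N\<^esub> ?h z"
      unfolding tensor_lift_def using az zy x_in_L closed by (auto simp: N.finsum_smult_ldistr)
    finally show "?h (a \<odot>\<^bsub>submod_as_module B ?LK\<^esub> z) = a \<odot>\<^bsub>N\<^esub> ?h z" by simp
  qed
qed

lemma tensor_lift_mult:
  assumes K: "is_A_submodule B A K" and N: "module (subring_ring B A) N"
    and \<beta>: "bilin_map (subring_ring B A) (submod_as_module B L) (submod_as_module B K) N \<beta>"
    and mk: "m \<in> L" "k \<in> K"
  shows "tensor_lift N \<beta> K (m \<otimes> k) = \<beta> m k"
proof -
  interpret N: module "subring_ring B A" N by fact
  have "\<beta> (x i) ((m \<otimes> k) \<otimes> y i) = (m \<otimes> y i) \<odot>\<^bsub>N\<^esub> \<beta> (x i) k" if "i < n" for i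
  proof -
    have "(m \<otimes> k) \<otimes> y i = (m \<otimes> y i) \<otimes> k"
      using mk that submodule_subset[OF K] by (simp add: m_ac subsetD)
    then show ?thesis using bilin_map_smult_right[OF \<beta>] mk that mult_in_A y_in_L' x_in_L by simp
  qed
  then have "tensor_lift N \<beta> K (m \<otimes> k) = (\<Oplus>\<^bsub>N\<^esub>i\<in>{..<n}. (m \<otimes> y i) \<odot>\<^bsub>N\<^esub> \<beta> (x i) k)"
    unfolding tensor_lift_def using mk x_in_L y_in_L' mult_in_A bilin_map_closed[OF \<beta>]
    by (auto intro!: N.M.finsum_cong' prod_submod.prod)
  also have "\<dots> = \<beta> (\<Oplus>i\<in>{..<n}. (m \<otimes> y i) \<otimes> x i) k"
    using submodule_lin_map_finsum[OF submodule_L N bilin_map_lin_left[OF \<beta> mk(2)],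
        of "{..<n}" "\<lambda>i. m \<otimes> y i" x]
      mk x_in_L y_in_L' mult_in_A by simp
  also have "\<dots> = \<beta> m k" using expansion[OF mk(1)] by simp
  finally show ?thesis .
qed

end

context ring_extension
begin

lemma invertible_ideal_fg_projective:
  assumes "invertible_ideal B A L"
  shows "fg_projective (subring_ring B A) (submod_as_module B L)"
  using invertible_ideal_dual_basis[OF assms] dual_basis.fg_projective by metis

lemma invertible_ideal_const_rank_one:
  assumes "invertible_ideal B A L"
  shows "const_rank_one (subring_ring B A) (submod_as_module B L)"
  using invertible_ideal_dual_basis[OF assms] dual_basis.const_rank_one by metis

lemma invertible_ideal_iso_iff:
  assumes L: "invertible_ideal B A L" and L': "invertible_ideal B A L'"
  shows "mod_iso (subring_ring B A) (submod_as_module B L) (submod_as_module B L') \<longleftrightarrow>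
    (\<exists>u\<in>Units B. L' = prod_submod B L (principal_submod B A u))"
proof -
  obtain K n x y where L: "dual_basis B A L K n x y" using invertible_ideal_dual_basis[OF L] .
  obtain K' n' x' y' where L': "dual_basis B A L' K' n' x' y'"
    using invertible_ideal_dual_basis[OF L'] .
  note sub = dual_basis.submodule_L[OF L] dual_basis.submodule_L[OF L']
  show ?thesis
  proof
    assume "mod_iso (subring_ring B A) (submod_as_module B L) (submod_as_module B L')"
    then obtain f
      where f: "lin_map (subring_ring B A) (submod_as_module B L) (submod_as_module B L') f"
      and bij: "bij_betw f L L'"
      unfolding mod_iso_def by auto
    obtain u where u: "u \<in> carrier B" "\<And>m. m \<in> L \<Longrightarrow> f m = m \<otimes> u"
      using dual_basis.lin_map_is_mult[OF L sub(2) f] by blast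
    have "L' = f ` L" using bij by (simp add: bij_betw_def)
    also have "\<dots> = (\<lambda>m. m \<otimes> u) ` L" using u(2) by (rule image_cong[OF refl])
    finally have "L' = (\<lambda>m. m \<otimes> u) ` L" .
    moreover from this have "u \<in> Units B"
      using dual_basis.unit_if_image_mult_eq[OF L' submodule_subset[OF sub(1)] u(1)] by blast
    ultimately show "\<exists>u\<in>Units B. L' = prod_submod B L (principal_submod B A u)"
      using prod_submod_principal[OF sub(1) u(1)] by auto
  next
    assume "\<exists>u\<in>Units B. L' = prod_submod B L (principal_submod B A u)"
    then obtain u where "u \<in> Units B" "L' = (\<lambda>m. m \<otimes> u) ` L"
      using prod_submod_principal[OF sub(1)] by blast
    then show "mod_iso (subring_ring B A) (submod_as_module B L) (submod_as_module B L')"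
      using mod_iso_mult_unit[OF sub(1)] by simp
  qed
qed

lemma invertible_ideal_tensor_universal:
  assumes L: "invertible_ideal B A L" and K: "is_A_submodule B A K"
    and N: "module (subring_ring B A) N"
    and \<beta>: "bilin_map (subring_ring B A) (submod_as_module B L) (submod_as_module B K) N \<beta>"
  shows "\<exists>!h. lin_map (subring_ring B A) (submod_as_module B (prod_submod B L K)) N h \<and>
    (\<forall>z\<in>prod_submod B L K. h z \<in> carrier N) \<and> h \<in> extensional (prod_submod B L K) \<and>
    (\<forall>m\<in>L. \<forall>k\<in>K. h (m \<otimes> k) = \<beta> m k)"
proof -
  obtain L' n x y where L: "dual_basis B A L L' n x y" using invertible_ideal_dual_basis[OF L] .
  note L_sub = dual_basis.submodule_L[OF L]
  define h where "h = dual_basis.tensor_lift B L n x y N \<beta> K"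
  have h: "lin_map (subring_ring B A) (submod_as_module B (prod_submod B L K)) N h"
    "h \<in> extensional (prod_submod B L K)" "\<And>m k. m \<in> L \<Longrightarrow> k \<in> K \<Longrightarrow> h (m \<otimes> k) = \<beta> m k"
    unfolding h_def using dual_basis.tensor_lift_lin_map[OF L K N \<beta>]
      dual_basis.tensor_lift_extensional[OF L] dual_basis.tensor_lift_mult[OF L K N \<beta>] by auto
  show ?thesis
  proof (rule ex1I[of _ h])
    fix h' assume h': "lin_map (subring_ring B A) (submod_as_module B (prod_submod B L K)) N h' \<and>
      (\<forall>z\<in>prod_submod B L K. h' z \<in> carrier N) \<and> h' \<in> extensional (prod_submod B L K) \<and>
      (\<forall>m\<in>L. \<forall>k\<in>K. h' (m \<otimes> k) = \<beta> m k)"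
    show "h' = h"
      using h' h prod_submod_lin_map_eq[OF L_sub K N, of h' h] by (auto intro: extensionalityI)
  qed (use h lin_map_closed[OF h(1)] in auto)
qed

end

section \<open>Projective modules of rank one over a semilocal extension\<close>

locale rank_one_projective = ring_extension +
  fixes M :: "('a, 'b) module" and n :: nat and f :: "'b \<Rightarrow> nat \<Rightarrow> 'a"
    and g :: "(nat \<Rightarrow> 'a) \<Rightarrow> 'b"
  assumes module_M: "module (subring_ring B A) M"
    and lin_f: "lin_map (subring_ring B A) M (free_module (subring_ring B A) n) f"
    and lin_g: "lin_map (subring_ring B A) (free_module (subring_ring B A) n) M g"
    and g_f: "\<And>m. m \<in> carrier M \<Longrightarrow> g (f m) = m"
    and rank_one: "const_rank_one (subring_ring B A) M"

begin

interpretation M: module "subring_ring B A" M by (rule module_M)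

lemmas smult_l_distr = M.smult_l_distr[simplified]
  and smult_assoc = M.smult_assoc1[simplified]
  and smult_zero = M.smult_l_null[simplified]

lemma f_beyond: "m \<in> carrier M \<Longrightarrow> n \<le> i \<Longrightarrow> f m i = \<zero>"
  using lin_map_closed[OF lin_f] by auto

lemma f_in_A: "m \<in> carrier M \<Longrightarrow> f m i \<in> A"
  using lin_map_closed[OF lin_f] f_beyond by (cases "i < n") auto

lemma f_carrier [simp]: "m \<in> carrier M \<Longrightarrow> f m i \<in> carrier B"
  using f_in_A by simp

lemma f_add: "m \<in> carrier M \<Longrightarrow> m' \<in> carrier M \<Longrightarrow> f (m \<oplus>\<^bsub>M\<^esub> m') i = f m i \<oplus> f m' i"
  using lin_map_add[OF lin_f] by simp

lemma f_smult: "a \<in> A \<Longrightarrow> m \<in> carrier M \<Longrightarrow> f (a \<odot>\<^bsub>M\<^esub> m) i = a \<otimes> f m i"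
  using lin_map_smult[OF lin_f] by simp

lemma f_zero: "f \<zero>\<^bsub>M\<^esub> i = \<zero>"
  using f_smult[of \<zero> "\<zero>\<^bsub>M\<^esub>" i] by simp

lemma f_a_inv: "m \<in> carrier M \<Longrightarrow> f (\<ominus>\<^bsub>M\<^esub> m) i = \<ominus> f m i"
  using f_add[of "\<ominus>\<^bsub>M\<^esub> m" m i] f_zero[of i] by (simp add: minus_equality M.M.l_neg)

lemma f_finsum:
  assumes "\<phi> \<in> I \<rightarrow> carrier M"
  shows "f (\<Oplus>\<^bsub>M\<^esub>k\<in>I. \<phi> k) i = (\<Oplus>k\<in>I. f (\<phi> k) i)"
  using assms
  by (induction I rule: infinite_finite_induct)
    (auto simp: f_zero f_add M.M.finsum_insert finsum_insert Pi_iff)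

definition gen :: "nat \<Rightarrow> 'b" where "gen k = g (basis_vec (subring_ring B A) k)"

lemma gen_carrier: "k < n \<Longrightarrow> gen k \<in> carrier M"
  using lin_map_closed[OF lin_g] by (auto simp: gen_def basis_vec_def)

lemma g_expansion:
  "v \<in> carrier (free_module (subring_ring B A) n) \<Longrightarrow> g v = (\<Oplus>\<^bsub>M\<^esub>k\<in>{..<n}. v k \<odot>\<^bsub>M\<^esub> gen k)"
  unfolding gen_def by (rule M.lin_map_free_module_expansion[OF lin_g])

lemma coordinate_expansion:
  assumes m: "m \<in> carrier M"
  shows "(\<Oplus>k\<in>{..<n}. f m k \<otimes> f (gen k) i) = f m i"
proof -
  have "f m i = f (\<Oplus>\<^bsub>M\<^esub>k\<in>{..<n}. f m k \<odot>\<^bsub>M\<^esub> gen k) i"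
    using g_f[OF m] g_expansion lin_map_closed[OF lin_f m] by simp
  also have "\<dots> = (\<Oplus>k\<in>{..<n}. f m k \<otimes> f (gen k) i)"
    using m f_in_A gen_carrier by (simp add: f_finsum f_smult Pi_iff cong: finsum_cong)
  finally show ?thesis by simp
qed

lemma local_basis_exists:
  assumes "primeideal P (subring_ring B A)"
  obtains m0 where "m0 \<in> carrier M"
    and "\<And>m. m \<in> carrier M \<Longrightarrow> \<exists>a\<in>A. \<exists>s\<in>A - P. s \<odot>\<^bsub>M\<^esub> m = a \<odot>\<^bsub>M\<^esub> m0"
    and "\<And>a t. a \<in> A \<Longrightarrow> t \<in> A - P \<Longrightarrow> t \<odot>\<^bsub>M\<^esub> (a \<odot>\<^bsub>M\<^esub> m0) = \<zero>\<^bsub>M\<^esub> \<Longrightarrow> \<exists>t'\<in>A - P. t' \<otimes> a = \<zero>"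
proof -
  obtain m0 where "local_basis (subring_ring B A) M P m0"
    using rank_one assms unfolding M.const_rank_one_iff by blast
  then have "m0 \<in> carrier M"
    and "\<And>m. m \<in> carrier M \<Longrightarrow> \<exists>a\<in>A. \<exists>s\<in>A - P. s \<odot>\<^bsub>M\<^esub> m = a \<odot>\<^bsub>M\<^esub> m0"
    and "\<And>a t. a \<in> A \<Longrightarrow> t \<in> A - P \<Longrightarrow> t \<odot>\<^bsub>M\<^esub> (a \<odot>\<^bsub>M\<^esub> m0) = \<zero>\<^bsub>M\<^esub> \<Longrightarrow>
      \<exists>t'\<in>A - P. t' \<otimes> a = \<zero>"
    unfolding local_basis_def by auto
  then show ?thesis by (rule that)
qed

lemma coordinate_minors:
  assumes m: "m \<in> carrier M" and m': "m' \<in> carrier M"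
  shows "f m i \<otimes> f m' j = f m' i \<otimes> f m j"
proof -
  define D where "D = f m i \<otimes> f m' j \<ominus> f m' i \<otimes> f m j"
  have "D \<in> A" using m m' f_in_A by (simp add: D_def a_minus_def)
  have "D = \<zero>\<^bsub>subring_ring B A\<^esub>"
  proof (rule cring.eq_zero_if_locally_zero[OF cring_subring_ring])
    show "D \<in> carrier (subring_ring B A)" using \<open>D \<in> A\<close> by simp
    fix P assume "maximalideal P (subring_ring B A)"
    then have P: "primeideal P (subring_ring B A)"
      by (rule cring.maximalideal_prime[OF cring_subring_ring])
    obtain m0 where m0: "m0 \<in> carrier M"
      and gen: "\<And>m. m \<in> carrier M \<Longrightarrow> \<exists>a\<in>A. \<exists>s\<in>A - P. s \<odot>\<^bsub>M\<^esub> m = a \<odot>\<^bsub>M\<^esub> m0"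
      using local_basis_exists[OF P] by metis
    obtain a s where as: "a \<in> A" "s \<in> A - P" "s \<odot>\<^bsub>M\<^esub> m = a \<odot>\<^bsub>M\<^esub> m0"
      using gen[OF m] by (elim bexE)
    obtain a' s' where as': "a' \<in> A" "s' \<in> A - P" "s' \<odot>\<^bsub>M\<^esub> m' = a' \<odot>\<^bsub>M\<^esub> m0"
      using gen[OF m'] by (elim bexE)
    have r: "s \<otimes> f m k = a \<otimes> f m0 k" "s' \<otimes> f m' k = a' \<otimes> f m0 k" for k
      using f_smult[of s m k] f_smult[of a m0 k] f_smult[of s' m' k] f_smult[of a' m0 k]
        as(1,3) as'(1,3) as(2) as'(2) m m' m0
      by simp_all
    have carrier: "s \<in> carrier B" "s' \<in> carrier B" "a \<in> carrier B" "a' \<in> carrier B"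
      "f m i \<in> carrier B" "f m j \<in> carrier B" "f m' i \<in> carrier B" "f m' j \<in> carrier B"
      "f m0 i \<in> carrier B" "f m0 j \<in> carrier B"
      using as as' m m' m0 by auto
    have "(s \<otimes> s') \<otimes> D = (s \<otimes> f m i) \<otimes> (s' \<otimes> f m' j) \<ominus> (s' \<otimes> f m' i) \<otimes> (s \<otimes> f m j)"
      unfolding D_def using carrier by algebra
    also have "\<dots> = (a \<otimes> f m0 i) \<otimes> (a' \<otimes> f m0 j) \<ominus> (a' \<otimes> f m0 i) \<otimes> (a \<otimes> f m0 j)"
      by (simp only: r)
    also have "\<dots> = \<zero>" using carrier by algebra
    finally have "(s \<otimes> s') \<otimes> D = \<zero>" .
    moreover have "s \<otimes> s' \<in> A - P" using as as' primeideal_subring_ringD(6)[OF P, of s s'] by auto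
    ultimately show "\<exists>u\<in>carrier (subring_ring B A) - P. u \<otimes>\<^bsub>subring_ring B A\<^esub> D = \<zero>\<^bsub>subring_ring B A\<^esub>"
      by auto
  qed
  then show ?thesis using m m' by (simp add: D_def r_right_minus_eq)
qed

lemma combination_minors:
  assumes "finite S" and m: "m \<in> carrier M" and c: "c \<in> S \<rightarrow> carrier B" and v: "v \<in> S \<rightarrow> carrier M"
  shows "(\<Oplus>s\<in>S. c s \<otimes> f (v s) j) \<otimes> f m i = (\<Oplus>s\<in>S. c s \<otimes> f (v s) i) \<otimes> f m j"
proof -
  have "(\<Oplus>s\<in>S. c s \<otimes> f (v s) j) \<otimes> f m i = (\<Oplus>s\<in>S. c s \<otimes> (f (v s) j \<otimes> f m i))"
    using assms by (simp add: finsum_ldistr m_assoc Pi_iff cong: finsum_cong)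
  also have "\<dots> = (\<Oplus>s\<in>S. c s \<otimes> (f (v s) i \<otimes> f m j))"
    using m c v coordinate_minors[of m "v _" i j] by (intro finsum_cong') (auto simp: Pi_iff m_comm)
  also have "\<dots> = (\<Oplus>s\<in>S. c s \<otimes> f (v s) i) \<otimes> f m j"
    using assms by (simp add: finsum_ldistr m_assoc Pi_iff cong: finsum_cong)
  finally show ?thesis .
qed

lemma smult_eq_if_coordinates_in_prime:
  assumes P: "primeideal P (subring_ring B A)" and m0: "m0 \<in> carrier M"
    and gen: "\<And>m. m \<in> carrier M \<Longrightarrow> \<exists>a\<in>A. \<exists>s\<in>A - P. s \<odot>\<^bsub>M\<^esub> m = a \<odot>\<^bsub>M\<^esub> m0"
    and coords: "\<And>k. k < n \<Longrightarrow> f m0 k \<in> P"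
  obtains s p where "s \<in> A - P" "p \<in> P" "s \<odot>\<^bsub>M\<^esub> m0 = p \<odot>\<^bsub>M\<^esub> m0"
proof -
  note P_facts = primeideal_subring_ringD[OF P]
  define S where "S = {m \<in> carrier M. \<exists>s\<in>A - P. \<exists>p\<in>P. s \<odot>\<^bsub>M\<^esub> m = p \<odot>\<^bsub>M\<^esub> m0}"
  have S_I: "m \<in> S" if "m \<in> carrier M" "s \<in> A - P" "p \<in> P" "s \<odot>\<^bsub>M\<^esub> m = p \<odot>\<^bsub>M\<^esub> m0" for m s p
    using that unfolding S_def by blast
  have "\<one> \<odot>\<^bsub>M\<^esub> \<zero>\<^bsub>M\<^esub> = \<zero> \<odot>\<^bsub>M\<^esub> m0" using smult_zero[OF m0] by simp
  from S_I[OF M.M.zero_closed _ _ this] have S_zero: "\<zero>\<^bsub>M\<^esub> \<in> S" using P_facts(2,3) by simp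
  have S_add: "m \<oplus>\<^bsub>M\<^esub> m' \<in> S" if mS: "m \<in> S" "m' \<in> S" for m m'
  proof -
    obtain s p s' p' where sp: "s \<in> A - P" "p \<in> P" "s \<odot>\<^bsub>M\<^esub> m = p \<odot>\<^bsub>M\<^esub> m0"
      and sp': "s' \<in> A - P" "p' \<in> P" "s' \<odot>\<^bsub>M\<^esub> m' = p' \<odot>\<^bsub>M\<^esub> m0"
      and mm': "m \<in> carrier M" "m' \<in> carrier M"
      using mS unfolding S_def by blast
    have A: "s \<in> A" "s' \<in> A" "p \<in> A" "p' \<in> A" using sp sp' P_facts(1) by auto
    have "(s \<otimes> s') \<odot>\<^bsub>M\<^esub> (m \<oplus>\<^bsub>M\<^esub> m') = s' \<odot>\<^bsub>M\<^esub> (s \<odot>\<^bsub>M\<^esub> m) \<oplus>\<^bsub>M\<^esub> s \<odot>\<^bsub>M\<^esub> (s' \<odot>\<^bsub>M\<^esub> m')"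
      using A mm' by (simp add: M.smult_r_distr smult_assoc[symmetric] m_comm)
    also have "\<dots> = (s' \<otimes> p \<oplus> s \<otimes> p') \<odot>\<^bsub>M\<^esub> m0"
      using A m0 by (simp add: sp(3) sp'(3) smult_l_distr smult_assoc)
    moreover have "s \<otimes> s' \<in> A - P" using P_facts(6)[of s s'] sp sp' by auto
    moreover have "s' \<otimes> p \<oplus> s \<otimes> p' \<in> P" using P_facts(4,5) A sp(2) sp'(2) by simp
    ultimately show ?thesis using S_I mm' by simp
  qed
  have S_gen: "f m0 k \<odot>\<^bsub>M\<^esub> gen k \<in> S" if k: "k \<in> {..<n}" for k
  proof -
    obtain a s where as: "a \<in> A" "s \<in> A - P" "s \<odot>\<^bsub>M\<^esub> gen k = a \<odot>\<^bsub>M\<^esub> m0"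
      using gen[OF gen_carrier, of k] k by (auto elim!: bexE)
    have fP: "f m0 k \<in> P" using coords k by simp
    have "s \<odot>\<^bsub>M\<^esub> (f m0 k \<odot>\<^bsub>M\<^esub> gen k) = f m0 k \<odot>\<^bsub>M\<^esub> (s \<odot>\<^bsub>M\<^esub> gen k)"
      using as(1,2) m0 f_in_A[OF m0] gen_carrier k by (simp add: smult_assoc[symmetric] m_comm)
    also have "\<dots> = (f m0 k \<otimes> a) \<odot>\<^bsub>M\<^esub> m0"
      using as m0 f_in_A[OF m0] by (simp add: smult_assoc)
    finally have "s \<odot>\<^bsub>M\<^esub> (f m0 k \<odot>\<^bsub>M\<^esub> gen k) = (f m0 k \<otimes> a) \<odot>\<^bsub>M\<^esub> m0" .
    moreover have "f m0 k \<otimes> a \<in> P" using P_facts(5) fP as(1) f_in_A[OF m0] by (simp add: m_comm)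
    ultimately show ?thesis using S_I as(2) f_in_A[OF m0] gen_carrier k by simp
  qed
  have "(\<Oplus>\<^bsub>M\<^esub>k\<in>{..<n}. f m0 k \<odot>\<^bsub>M\<^esub> gen k) \<in> S"
    using S_zero S_add S_gen by (intro M.M.finsum_closed_subset) (auto simp: S_def)
  then have "m0 \<in> S" using g_expansion lin_map_closed[OF lin_f m0] g_f[OF m0] by simp
  then show ?thesis using that unfolding S_def by blast
qed

lemma coordinate_notin_maximalideal:
  assumes Q: "maximalideal Q B"
  obtains m i where "m \<in> carrier M" "i < n" "f m i \<notin> Q"
proof (rule ccontr)
  assume "\<not> thesis"
  with that have in_Q: "f m i \<in> Q" if "m \<in> carrier M" "i < n" for m i
    using \<open>m \<in> carrier M\<close> \<open>i < n\<close> by blast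
  define P where "P = Q \<inter> A"
  have P: "primeideal P (subring_ring B A)" unfolding P_def by (rule primeideal_contract[OF Q])
  note P_facts = primeideal_subring_ringD[OF P]
  obtain m0 where m0: "m0 \<in> carrier M"
    and gen: "\<And>m. m \<in> carrier M \<Longrightarrow> \<exists>a\<in>A. \<exists>s\<in>A - P. s \<odot>\<^bsub>M\<^esub> m = a \<odot>\<^bsub>M\<^esub> m0"
    and torsion_free: "\<And>a t. a \<in> A \<Longrightarrow> t \<in> A - P \<Longrightarrow> t \<odot>\<^bsub>M\<^esub> (a \<odot>\<^bsub>M\<^esub> m0) = \<zero>\<^bsub>M\<^esub> \<Longrightarrow>
      \<exists>t'\<in>A - P. t' \<otimes> a = \<zero>"
    using local_basis_exists[OF P] by metis
  have "f m0 k \<in> P" if "k < n" for k using in_Q[OF m0 that] f_in_A[OF m0] by (simp add: P_def)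
  then obtain s p where sp: "s \<in> A - P" "p \<in> P" "s \<odot>\<^bsub>M\<^esub> m0 = p \<odot>\<^bsub>M\<^esub> m0"
    using smult_eq_if_coordinates_in_prime[OF P m0 gen] by metis
  have pA: "p \<in> A" using sp P_facts(1) by auto
  have "(s \<oplus> \<ominus> p) \<odot>\<^bsub>M\<^esub> m0 = (p \<oplus> \<ominus> p) \<odot>\<^bsub>M\<^esub> m0"
    using sp pA m0 by (simp add: smult_l_distr)
  then have "\<one> \<odot>\<^bsub>M\<^esub> ((s \<oplus> \<ominus> p) \<odot>\<^bsub>M\<^esub> m0) = \<zero>\<^bsub>M\<^esub>"
    using pA m0 sp(1) by (simp add: r_neg smult_zero)
  then obtain t where t: "t \<in> A - P" "t \<otimes> (s \<oplus> \<ominus> p) = \<zero>"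
    using torsion_free[of "s \<oplus> \<ominus> p" \<one>] sp pA P_facts(3) by auto
  then have "t \<otimes> s = t \<otimes> p" using sp pA by (simp add: r_distr r_minus add.inv_solve_right')
  then have "t \<otimes> s \<in> P" using P_facts(5) t sp by simp
  then show False using P_facts(6)[of t s] t sp by auto
qed

lemma coordinate_choice:
  obtains mQ iQ where "\<And>Q. maximalideal Q B \<Longrightarrow> mQ Q \<in> carrier M"
    and "\<And>Q. maximalideal Q B \<Longrightarrow> iQ Q < n" and "\<And>Q. maximalideal Q B \<Longrightarrow> f (mQ Q) (iQ Q) \<notin> Q"
proof -
  have "\<forall>Q\<in>{Q. maximalideal Q B}. \<exists>p. fst p \<in> carrier M \<and> snd p < n \<and> f (fst p) (snd p) \<notin> Q"
  proof
    fix Q assume "Q \<in> {Q. maximalideal Q B}"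
    then obtain m i where "m \<in> carrier M" "i < n" "f m i \<notin> Q"
      by (auto elim: coordinate_notin_maximalideal)
    then show "\<exists>p. fst p \<in> carrier M \<and> snd p < n \<and> f (fst p) (snd p) \<notin> Q" by auto
  qed
  from bchoice[OF this] obtain p where p: "\<forall>Q\<in>{Q. maximalideal Q B}.
      fst (p Q) \<in> carrier M \<and> snd (p Q) < n \<and> f (fst (p Q)) (snd (p Q)) \<notin> Q" ..
  show ?thesis by (rule that[of "\<lambda>Q. fst (p Q)" "\<lambda>Q. snd (p Q)"]) (use p in auto)
qed

end

locale coordinate_factorization = rank_one_projective +
  fixes w :: "nat \<Rightarrow> 'a" and \<phi> :: "'b \<Rightarrow> 'a"
  assumes w_carrier: "\<And>i. i < n \<Longrightarrow> w i \<in> carrier B"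
    and w_unimodular: "\<And>Q. maximalideal Q B \<Longrightarrow> \<exists>i<n. w i \<notin> Q"
    and \<phi>_carrier: "\<And>m. m \<in> carrier M \<Longrightarrow> \<phi> m \<in> carrier B"
    and factorization: "\<And>m i. m \<in> carrier M \<Longrightarrow> i < n \<Longrightarrow> \<phi> m \<otimes> w i = f m i"

begin

interpretation M: module "subring_ring B A" M by (rule module_M)

lemma eq_if_mult_w_eq:
  assumes b: "b \<in> carrier B" "b' \<in> carrier B" and eq: "\<And>i. i < n \<Longrightarrow> b \<otimes> w i = b' \<otimes> w i"
  shows "b = b'"
proof -
  have "b \<ominus> b' = \<zero>"
  proof (rule eq_zero_if_locally_zero)
    fix Q assume "maximalideal Q B"
    then obtain i where "i < n" "w i \<notin> Q" using w_unimodular by blast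
    moreover have "w i \<otimes> (b \<ominus> b') = \<zero>" if "i < n" for i
      using eq[OF that] b w_carrier[OF that] by (simp add: r_distr r_minus m_comm a_minus_def r_neg)
    ultimately show "\<exists>s\<in>carrier B - Q. s \<otimes> (b \<ominus> b') = \<zero>" using w_carrier by blast
  qed (use b in simp)
  then show ?thesis using b by (simp add: r_right_minus_eq)
qed

lemma \<phi>_add: "m \<in> carrier M \<Longrightarrow> m' \<in> carrier M \<Longrightarrow> \<phi> (m \<oplus>\<^bsub>M\<^esub> m') = \<phi> m \<oplus> \<phi> m'"
  by (rule eq_if_mult_w_eq) (simp_all add: \<phi>_carrier w_carrier factorization f_add l_distr)

lemma \<phi>_smult: "a \<in> A \<Longrightarrow> m \<in> carrier M \<Longrightarrow> \<phi> (a \<odot>\<^bsub>M\<^esub> m) = a \<otimes> \<phi> m"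
  by (rule eq_if_mult_w_eq) (simp_all add: \<phi>_carrier w_carrier factorization f_smult m_assoc)

lemma \<phi>_zero: "\<phi> \<zero>\<^bsub>M\<^esub> = \<zero>"
  by (rule eq_if_mult_w_eq) (simp_all add: \<phi>_carrier w_carrier factorization f_zero)

lemma \<phi>_a_inv: "m \<in> carrier M \<Longrightarrow> \<phi> (\<ominus>\<^bsub>M\<^esub> m) = \<ominus> \<phi> m"
  by (rule eq_if_mult_w_eq) (simp_all add: \<phi>_carrier w_carrier factorization f_a_inv l_minus)

lemma \<phi>_inj: "inj_on \<phi> (carrier M)"
proof (rule inj_onI)
  fix m m' assume m: "m \<in> carrier M" "m' \<in> carrier M" and "\<phi> m = \<phi> m'"
  then have "f m i = f m' i" for i
    using factorization[of m i] factorization[of m' i] f_beyond[of m i] f_beyond[of m' i]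
    by (cases "i < n") auto
  then have "f m = f m'" by blast
  then show "m = m'" using g_f m by metis
qed

lemma submodule_image: "is_A_submodule B A (\<phi> ` carrier M)"
  unfolding is_A_submodule_def using \<phi>_carrier \<phi>_zero[symmetric] \<phi>_add[symmetric] \<phi>_a_inv[symmetric]
    \<phi>_smult[symmetric]
  by (auto intro!: imageI)

lemma mod_iso_image: "mod_iso (subring_ring B A) M (submod_as_module B (\<phi> ` carrier M))"
  unfolding mod_iso_def
proof (intro exI conjI)
  show "lin_map (subring_ring B A) M (submod_as_module B (\<phi> ` carrier M)) \<phi>"
    by (intro lin_mapI) (auto simp: \<phi>_add \<phi>_smult)
  show "bij_betw \<phi> (carrier M) (carrier (submod_as_module B (\<phi> ` carrier M)))"
    using \<phi>_inj by (simp add: bij_betw_def)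
qed

lemma sum_eq_one: "(\<Oplus>k\<in>{..<n}. \<phi> (gen k) \<otimes> w k) = \<one>"
proof -
  define x where "x = (\<Oplus>k\<in>{..<n}. \<phi> (gen k) \<otimes> w k)"
  have x: "x \<in> carrier B" unfolding x_def using \<phi>_carrier gen_carrier w_carrier by auto
  \<comment> \<open>x fixes every \<open>\<phi> m\<close>, so all coordinates of M annihilate x - 1\<close>
  have \<phi>_x: "\<phi> m \<otimes> x = \<phi> m" if m: "m \<in> carrier M" for m
  proof (rule eq_if_mult_w_eq)
    fix i assume i: "i < n"
    have "\<phi> m \<otimes> x \<otimes> w i = (\<Oplus>k\<in>{..<n}. (\<phi> m \<otimes> (\<phi> (gen k) \<otimes> w k)) \<otimes> w i)"
      unfolding x_def using m \<phi>_carrier gen_carrier w_carrier i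
      by (simp add: finsum_rdistr finsum_ldistr Pi_iff)
    also have "\<dots> = (\<Oplus>k\<in>{..<n}. (\<phi> m \<otimes> w k) \<otimes> (\<phi> (gen k) \<otimes> w i))"
      using m \<phi>_carrier gen_carrier w_carrier i by (intro finsum_cong') (auto simp: m_ac)
    also have "\<dots> = (\<Oplus>k\<in>{..<n}. f m k \<otimes> f (gen k) i)"
      using m gen_carrier i by (intro finsum_cong') (auto simp: factorization)
    also have "\<dots> = \<phi> m \<otimes> w i" using coordinate_expansion[OF m] factorization[OF m i] by simp
    finally show "\<phi> m \<otimes> x \<otimes> w i = \<phi> m \<otimes> w i" .
  qed (use m x \<phi>_carrier in simp_all)
  have "f m i \<otimes> x = f m i" if m: "m \<in> carrier M" for m i
  proof (cases "i < n")
    case True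
    then have "f m i \<otimes> x = (\<phi> m \<otimes> x) \<otimes> w i"
      using factorization[OF m True] \<phi>_carrier[OF m] w_carrier x f_carrier[OF m] by (simp add: m_ac)
    then show ?thesis using m True factorization \<phi>_x by simp
  qed (use m f_beyond x in simp)
  then have annihilates: "f m i \<otimes> (x \<ominus> \<one>) = \<zero>" if "m \<in> carrier M" for m i
    using that x by (simp add: a_minus_def r_distr r_minus r_neg)
  have "x \<ominus> \<one> = \<zero>"
  proof (rule eq_zero_if_locally_zero)
    fix Q assume "maximalideal Q B"
    then obtain m i where "m \<in> carrier M" "i < n" "f m i \<notin> Q"
      by (rule coordinate_notin_maximalideal)
    then show "\<exists>s\<in>carrier B - Q. s \<otimes> (x \<ominus> \<one>) = \<zero>"
      using annihilates by (intro bexI[of _ "f m i"]) auto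
  qed (use x in simp)
  then show ?thesis using x by (simp add: x_def r_right_minus_eq)
qed

lemma invertible_image: "invertible_ideal B A (\<phi> ` carrier M)"
proof -
  define L' where "L' = {b \<in> carrier B. \<forall>m\<in>carrier M. \<phi> m \<otimes> b \<in> A}"
  have "is_A_submodule B A L'"
    unfolding is_A_submodule_def L'_def using \<phi>_carrier
    by (auto simp: r_distr r_minus m_lcomm)
  moreover have "prod_submod B (\<phi> ` carrier M) L' = A"
  proof
    show "prod_submod B (\<phi> ` carrier M) L' \<subseteq> A"
    proof
      fix z assume "z \<in> prod_submod B (\<phi> ` carrier M) L'"
      then show "z \<in> A" by (induction rule: prod_submod.induct) (auto simp: L'_def)
    qed
    have w_L': "w k \<in> L'" if "k < n" for k
      using that w_carrier factorization f_in_A by (simp add: L'_def)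
    show "A \<subseteq> prod_submod B (\<phi> ` carrier M) L'"
    proof
      fix a assume a: "a \<in> A"
      have "a = a \<otimes> (\<Oplus>k\<in>{..<n}. \<phi> (gen k) \<otimes> w k)" using sum_eq_one a by simp
      also have "\<dots> = (\<Oplus>k\<in>{..<n}. a \<otimes> (\<phi> (gen k) \<otimes> w k))"
        using a gen_carrier \<phi>_carrier w_carrier by (intro finsum_rdistr) auto
      also have "\<dots> = (\<Oplus>k\<in>{..<n}. \<phi> (a \<odot>\<^bsub>M\<^esub> gen k) \<otimes> w k)"
        using a gen_carrier \<phi>_carrier w_carrier by (intro finsum_cong') (auto simp: \<phi>_smult m_assoc)
      also have "\<dots> \<in> prod_submod B (\<phi> ` carrier M) L'"
      proof (rule finsum_closed_subset)
        show "prod_submod B (\<phi> ` carrier M) L' \<subseteq> carrier B"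
          using \<phi>_carrier by (intro prod_submod_subset) (auto simp: L'_def)
        show "(\<lambda>k. \<phi> (a \<odot>\<^bsub>M\<^esub> gen k) \<otimes> w k) \<in> {..<n} \<rightarrow> prod_submod B (\<phi> ` carrier M) L'"
          using a gen_carrier w_L' by (auto intro!: prod_submod.prod)
      qed (auto intro: prod_submod.zero prod_submod.add)
      finally show "a \<in> prod_submod B (\<phi> ` carrier M) L'" .
    qed
  qed
  ultimately show ?thesis using submodule_image unfolding invertible_ideal_def by blast
qed

end

context rank_one_projective
begin

interpretation M: module "subring_ring B A" M by (rule module_M)

lemma coordinate_factorizationI:
  assumes u: "u \<in> Units B" and w: "\<And>i. w i \<in> carrier B"
    and w_unimodular: "\<And>Q. maximalideal Q B \<Longrightarrow> \<exists>i<n. w i \<notin> Q"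
    and \<psi>: "\<And>m. m \<in> carrier M \<Longrightarrow> \<psi> m \<in> carrier B"
    and factor: "\<And>m i. m \<in> carrier M \<Longrightarrow> u \<otimes> f m i = \<psi> m \<otimes> w i"
  shows "coordinate_factorization B A M n f g w (\<lambda>m. inv u \<otimes> \<psi> m)"
proof (intro coordinate_factorization.intro rank_one_projective_axioms
    coordinate_factorization_axioms.intro)
  show "inv u \<otimes> \<psi> m \<otimes> w i = f m i" if "m \<in> carrier M" for m i
  proof -
    have "inv u \<otimes> \<psi> m \<otimes> w i = inv u \<otimes> (u \<otimes> f m i)"
      using factor[OF that, of i] u \<psi>[OF that] w by (simp add: m_assoc)
    also have "\<dots> = f m i" using u that by (simp add: m_assoc[symmetric] Units_l_inv Units_closed)
    finally show ?thesis .
  qed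
qed (use assms in auto)

lemma exists_coordinate_factorization:
  assumes fin: "finite {Q. maximalideal Q B}"
  obtains w \<phi> where "coordinate_factorization B A M n f g w \<phi>"
proof -
  define \<Q> where "\<Q> = {Q. maximalideal Q B}"
  have fin_\<Q>: "finite \<Q>" using fin by (simp add: \<Q>_def)
  obtain e where e: "\<And>Q. maximalideal Q B \<Longrightarrow> e Q \<in> carrier B - Q"
    and e_other: "\<And>Q Q'. maximalideal Q B \<Longrightarrow> maximalideal Q' B \<Longrightarrow> Q' \<noteq> Q \<Longrightarrow> e Q \<in> Q'"
    using maximalideals_separating_elements[OF fin] by metis
  obtain mQ iQ where mQ: "\<And>Q. Q \<in> \<Q> \<Longrightarrow> mQ Q \<in> carrier M"
    and iQ: "\<And>Q. Q \<in> \<Q> \<Longrightarrow> iQ Q < n" and notin: "\<And>Q. Q \<in> \<Q> \<Longrightarrow> f (mQ Q) (iQ Q) \<notin> Q"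
    using coordinate_choice unfolding \<Q>_def mem_Collect_eq by metis
  define w where "w i = (\<Oplus>Q\<in>\<Q>. e Q \<otimes> f (mQ Q) i)" for i
  define u where "u = (\<Oplus>Q\<in>\<Q>. e Q \<otimes> w (iQ Q))"
  define \<psi> where "\<psi> m = (\<Oplus>Q\<in>\<Q>. e Q \<otimes> f m (iQ Q))" for m
  have e_carrier: "e \<in> \<Q> \<rightarrow> carrier B" using e by (auto simp: \<Q>_def)
  have w_carrier: "w i \<in> carrier B" for i
    using e_carrier mQ by (auto simp: w_def intro!: finsum_closed)
  have separated: "(\<Oplus>Q'\<in>\<Q>. e Q' \<otimes> c Q') \<notin> Q" if "Q \<in> \<Q>" "c \<in> \<Q> \<rightarrow> carrier B" "c Q \<notin> Q" for Q c
    using that fin e e_other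
    by (intro finsum_separated_notin maximalideal_prime) (auto simp: \<Q>_def)
  have w_notin: "w (iQ Q) \<notin> Q" if "Q \<in> \<Q>" for Q
    unfolding w_def using separated[OF that] notin[OF that] mQ by auto
  \<comment> \<open>modulo Q, the element u is congruent to e_Q^2 f(m_Q)_(i_Q)\<close>
  have "u \<in> Units B"
    unfolding u_def using separated w_notin w_carrier e_carrier
    by (intro unit_if_notin_maximalideals finsum_closed) (auto simp: \<Q>_def)
  have u_factor: "u \<otimes> f m i = \<psi> m \<otimes> w i" if m: "m \<in> carrier M" for m i
  proof -
    have "u \<otimes> f m i = (\<Oplus>Q\<in>\<Q>. e Q \<otimes> (w (iQ Q) \<otimes> f m i))"
      unfolding u_def using fin_\<Q> m e_carrier w_carrier
      by (simp add: finsum_ldistr m_assoc Pi_iff cong: finsum_cong)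
    also have "\<dots> = (\<Oplus>Q\<in>\<Q>. e Q \<otimes> (f m (iQ Q) \<otimes> w i))"
      unfolding w_def using m e_carrier mQ combination_minors[OF fin_\<Q> m e_carrier, of mQ]
      by (intro finsum_cong') (auto simp: Pi_iff m_comm)
    also have "\<dots> = \<psi> m \<otimes> w i"
      unfolding \<psi>_def using fin_\<Q> m e_carrier w_carrier
      by (simp add: finsum_ldistr m_assoc Pi_iff cong: finsum_cong)
    finally show ?thesis .
  qed
  have \<psi>_carrier: "\<psi> m \<in> carrier B" if "m \<in> carrier M" for m
    unfolding \<psi>_def using that e_carrier by (auto intro!: finsum_closed)
  have "coordinate_factorization B A M n f g w (\<lambda>m. inv u \<otimes> \<psi> m)"
    using \<open>u \<in> Units B\<close> w_carrier w_notin iQ \<psi>_carrier u_factor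
    by (intro coordinate_factorizationI) (auto simp: \<Q>_def)
  then show ?thesis by (rule that)
qed

lemma iso_invertible_ideal:
  assumes "finite {Q. maximalideal Q B}"
  obtains L where "invertible_ideal B A L" "mod_iso (subring_ring B A) (submod_as_module B L) M"
proof -
  obtain w \<phi> where \<phi>: "coordinate_factorization B A M n f g w \<phi>"
    using exists_coordinate_factorization[OF assms] .
  note L = coordinate_factorization.submodule_image[OF \<phi>]
  show ?thesis
  proof
    show "invertible_ideal B A (\<phi> ` carrier M)"
      by (rule coordinate_factorization.invertible_image[OF \<phi>])
    show "mod_iso (subring_ring B A) (submod_as_module B (\<phi> ` carrier M)) M"
      using M.mod_iso_sym[OF submodule_module[OF L] coordinate_factorization.mod_iso_image[OF \<phi>]] .
  qed
qed

end

lemma (in ring_extension) exists_invertible_ideal_iso: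
  fixes M :: "('a, 'b) module"
  assumes fin: "finite {Q. maximalideal Q B}" and M: "module (subring_ring B A) M"
    and fgp: "fg_projective (subring_ring B A) M" and rank: "const_rank_one (subring_ring B A) M"
  shows "\<exists>L. invertible_ideal B A L \<and> mod_iso (subring_ring B A) (submod_as_module B L) M"
proof -
  obtain n f g where "lin_map (subring_ring B A) M (free_module (subring_ring B A) n) f"
    "lin_map (subring_ring B A) (free_module (subring_ring B A) n) M g" "\<forall>m\<in>carrier M. g (f m) = m"
    using fgp unfolding fg_projective_def by blast
  then have "rank_one_projective B A M n f g"
    using M rank
    by (simp add: rank_one_projective_def rank_one_projective_axioms_def ring_extension_axioms)
  then obtain L where "invertible_ideal B A L" "mod_iso (subring_ring B A) (submod_as_module B L) M"
    using rank_one_projective.iso_invertible_ideal[OF _ fin] by metis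
  then show ?thesis by blast
qed

theorem corollary4p6:
  fixes B :: "'b ring" and A :: "'b set"
  assumes "cring B" and "subring A B"
    and "finite {I. maximalideal I B}"
  shows
    \<comment> \<open>the map lands in Pic(A)\<close>
    "(\<forall>L. invertible_ideal B A L \<longrightarrow>
        fg_projective (subring_ring B A) (submod_as_module B L) \<and>
        const_rank_one (subring_ring B A) (submod_as_module B L))
     \<comment> \<open>well defined and injective on classes in C(A,B)\<close>
     \<and> (\<forall>L L'. invertible_ideal B A L \<and> invertible_ideal B A L' \<longrightarrow>
        (mod_iso (subring_ring B A) (submod_as_module B L) (submod_as_module B L') \<longleftrightarrow>
         (\<exists>x\<in>Units B. L' = prod_submod B L (principal_submod B A x))))
     \<comment> \<open>surjective\<close>
     \<and> (\<forall>M :: ('b, 'm) module. module (subring_ring B A) M \<and>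
          fg_projective (subring_ring B A) M \<and> const_rank_one (subring_ring B A) M \<longrightarrow>
        (\<exists>L. invertible_ideal B A L \<and> mod_iso (subring_ring B A) (submod_as_module B L) M))
     \<comment> \<open>homomorphism: LL' together with multiplication is a tensor product of L and L'\<close>
     \<and> (\<forall>L L'. invertible_ideal B A L \<and> invertible_ideal B A L' \<longrightarrow>
        bilin_map (subring_ring B A) (submod_as_module B L) (submod_as_module B L')
          (submod_as_module B (prod_submod B L L')) (\<lambda>x y. x \<otimes>\<^bsub>B\<^esub> y) \<and>
        (\<forall>(N :: ('b, 'n) module) \<beta>. module (subring_ring B A) N \<and>
           bilin_map (subring_ring B A) (submod_as_module B L) (submod_as_module B L') N \<beta> \<longrightarrow>
           (\<exists>!h. lin_map (subring_ring B A) (submod_as_module B (prod_submod B L L')) N h \<and>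
                 (\<forall>x\<in>prod_submod B L L'. h x \<in> carrier N) \<and>
                 h \<in> extensional (prod_submod B L L') \<and>
                 (\<forall>x\<in>L. \<forall>y\<in>L'. h (x \<otimes>\<^bsub>B\<^esub> y) = \<beta> x y))))"
proof -
  interpret ring_extension B A
    using assms(1,2) by (simp add: ring_extension_def ring_extension_axioms_def)
  show ?thesis
    by (intro conjI allI impI; (elim conjE)?)
      (assumption | rule invertible_ideal_fg_projective invertible_ideal_const_rank_one
        invertible_ideal_iso_iff exists_invertible_ideal_iso[OF assms(3)] prod_submod_bilin_map
        invertible_ideal_tensor_universal invertible_ideal_submodule)+
qed

end
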